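(* Let $U\ge 1$, $n\ge1$ and $k\ge Un$ be integers. For each user $j=1,\dots,U$ let $\mathbf{L}_j\subseteq M_{n\times k}(\mathbb{C})$ be a lattice of full rank $r=2kn$ (as a lattice in the real vector space $M_{n\times k}(\mathbb{C})\cong\mathbb{R}^{2kn}$) with $\mathbb{Z}$-basis $B_{j,1},\dots,B_{j,r}$, and for a positive integer $N_j$ put $$\mathbf{L}_j(N_j)=\Big\{\sum_{i=1}^r b_iB_{j,i}\;:\; b_i\in\mathbb{Z},\ -N_j\le b_i\le N_j\Big\}.$$ Define $$\mathfrak{D}(N_1,\dots,N_U)=\min_{X_j\in\mathbf{L}_j(N_j)\setminus\{0\},\ j=1,\dots,U}\det(MM^{\dagger}),$$ where $M=M(X_1,\dots,X_U)$ is the $Un\times k$ matrix obtained by stacking $X_1,\dots,X_U$ vertically (rows of $X_1$ first, then those of $X_2$, etc.), and write $\mathfrak{D}(N)=\mathfrak{D}(N,\dots,N)$. Then there is a constant $K>0$, depending on the lattices $\mathbf{L}_1,\dots,\mathbf{L}_U$ (and on $n,k,U$) but not on $N_1,\dots,N_U$, such that for all positive integers $N_1,\dots,N_U$, $$\mathfrak{D}(N_1,\dots,N_U)\le K\prod_{l=1}^{U-1}N_l^{-\frac{2n^2(U-l)}{k-n(U-l)}},$$ and in particular $\mathfrak{D}(N)\le K/N^{\alpha}$ with $\alpha=\sum_{l=1}^{U-1}\frac{2n^2(U-l)}{k-n(U-l)}$. In the special case $k=Un$ this reads $$\mathfrak{D}(N_1,\dots,N_U)\le K\prod_{l=1}^{U-1}N_l^{-\frac{2n(U-l)}{l}},\qquad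 \mathfrak{D}(N)\le \frac{K}{N^{\beta}},\quad \beta=\sum_{l=1}^{U-1}\frac{2n(U-l)}{l}.$$
   Context: $M_{n\times k}(\mathbb{C})$ is the space of complex $n\times k$ matrices, regarded as a real vector space of dimension $2nk$. For a complex matrix $X$, $X^{\dagger}$ denotes its conjugate transpose. The tuple $(\mathbf{L}_1(N_1),\dots,\mathbf{L}_U(N_U))$ is called a $U$-user MIMO-MAC lattice code and $\mathfrak{D}$ its decay function. *)

theory Defs
  imports Complex_Main "Jordan_Normal_Form.Determinant"
begin

definition ctrans :: "complex mat \<Rightarrow> complex mat" where
  "ctrans A = mat (dim_col A) (dim_row A) (\<lambda>(i,j). cnj (A $$ (j,i)))"

definition lat_comb :: "nat \<Rightarrow> nat \<Rightarrow> nat \<Rightarrow> (nat \<Rightarrow> complex mat) \<Rightarrow> (nat \<Rightarrow> int) \<Rightarrow> complex mat" where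
  "lat_comb n k r B b = mat n k (\<lambda>(a,c). \<Sum>i\<in>{1..r}. of_int (b i) * (B i $$ (a,c)))"

(* B_1,...,B_r is a basis of M_{n x k}(C) as a real vector space (r = 2kn),
   i.e. it spans a full-rank lattice *)
definition full_rank_lattice_basis :: "nat \<Rightarrow> nat \<Rightarrow> (nat \<Rightarrow> complex mat) \<Rightarrow> bool" where
  "full_rank_lattice_basis n k B \<longleftrightarrow>
     (\<forall>i\<in>{1..2*k*n}. B i \<in> carrier_mat n k) \<and>
     (\<forall>c :: nat \<Rightarrow> real.
        mat n k (\<lambda>(a,d). \<Sum>i\<in>{1..2*k*n}. of_real (c i) * (B i $$ (a,d))) = 0\<^sub>m n k
        \<longrightarrow> (\<forall>i\<in>{1..2*k*n}. c i = 0))"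

definition trunc_lattice :: "nat \<Rightarrow> nat \<Rightarrow> (nat \<Rightarrow> complex mat) \<Rightarrow> nat \<Rightarrow> complex mat set" where
  "trunc_lattice n k B N =
     {lat_comb n k (2*k*n) B b | b. \<forall>i\<in>{1..2*k*n}. - int N \<le> b i \<and> b i \<le> int N}"

definition stack :: "nat \<Rightarrow> nat \<Rightarrow> nat \<Rightarrow> (nat \<Rightarrow> complex mat) \<Rightarrow> complex mat" where
  "stack U n k X = mat (U*n) k (\<lambda>(a,c). X (a div n + 1) $$ (a mod n, c))"

(* decay function: users j = 1..U, lattice bases B j, truncation parameters N j.
   det(M M^dagger) is real (M M^dagger is Hermitian), so we take its real part. *)
definition decay :: "nat \<Rightarrow> nat \<Rightarrow> nat \<Rightarrow> (nat \<Rightarrow> nat \<Rightarrow> complex mat) \<Rightarrow> (nat \<Rightarrow> nat) \<Rightarrow> real" where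
  "decay U n k B N = Min {Re (det (stack U n k X * ctrans (stack U n k X))) | X.
      \<forall>j\<in>{1..U}. X j \<in> trunc_lattice n k (B j) (N j) - {0\<^sub>m n k}}"

end

theory Submission
  imports Defs
begin

(* For a stacked matrix M with rows m_1, ..., m_{Un}, det(M M^dagger) is the product
   of the squared lengths of the Gram-Schmidt vectors of the rows (Gram determinant).  We
   orthogonalise from the LAST row backwards, so the rows of user l only have to be small
   relative to the rows already fixed for users l+1, ..., U.  These span a space of complex
   dimension d = n(U-l) < k, so each row of X_l only matters through its k - d coordinates
   along an orthonormal basis of the orthogonal complement.  These are 2n(k-d) real linear
   forms in the 2kn integer coordinates of X_l, and Dirichlet's pigeonhole principle gives a
   nonzero X_l in L_l(N_l) making all of them O(N_l^{-d/(k-d)}).  Choosing X_U, X_{U-1}, ...,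
   X_1 greedily in this way bounds the product of the squared Gram-Schmidt lengths of the
   block of user l by a constant times N_l^{-2nd/(k-d)}. *)

section \<open>Coordinate inner product\<close>

text \<open>Vectors of \<open>\<complex>\<^sup>k\<close> are represented as functions \<open>nat \<Rightarrow> complex\<close>; only the first
  \<open>k\<close> coordinates enter the inner product and the squared norm.\<close>

definition cinner :: "nat \<Rightarrow> (nat \<Rightarrow> complex) \<Rightarrow> (nat \<Rightarrow> complex) \<Rightarrow> complex" where
  "cinner k x y = (\<Sum>c<k. x c * cnj (y c))"

definition sqnorm :: "nat \<Rightarrow> (nat \<Rightarrow> complex) \<Rightarrow> real" where
  "sqnorm k x = (\<Sum>c<k. (cmod (x c))^2)"

definition supported :: "nat \<Rightarrow> (nat \<Rightarrow> complex) \<Rightarrow> bool" where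
  "supported k x \<longleftrightarrow> (\<forall>c\<ge>k. x c = 0)"

lemma cinner_self: "cinner k x x = of_real (sqnorm k x)"
  unfolding cinner_def sqnorm_def of_real_sum
  by (rule sum.cong) (simp_all add: complex_norm_square[symmetric])

lemma sqnorm_eq_Re: "sqnorm k x = Re (cinner k x x)"
  by (simp add: cinner_self)

lemma sqnorm_nonneg: "sqnorm k x \<ge> 0"
  unfolding sqnorm_def by (simp add: sum_nonneg)

lemma cinner_commute_cnj: "cinner k y x = cnj (cinner k x y)"
  unfolding cinner_def by (simp add: mult.commute)

lemma sqnorm_zero: "sqnorm k x = 0 \<Longrightarrow> c < k \<Longrightarrow> x c = 0"
  unfolding sqnorm_def by (subst (asm) sum_nonneg_eq_0_iff) auto

lemma cinner_zero_right: "sqnorm k y = 0 \<Longrightarrow> cinner k x y = 0"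
  unfolding cinner_def by (auto intro!: sum.neutral simp: sqnorm_zero)

lemma cinner_sum_left:
  "cinner k (\<lambda>c. \<Sum>j\<in>A. a j * u j c) y = (\<Sum>j\<in>A. a j * cinner k (u j) y)"
  unfolding cinner_def sum_distrib_right sum_distrib_left
  by (subst sum.swap) (simp add: mult.assoc)

lemma cinner_sum_right:
  "cinner k y (\<lambda>c. \<Sum>j\<in>A. a j * u j c) = (\<Sum>j\<in>A. cnj (a j) * cinner k y (u j))"
  unfolding cinner_def sum_distrib_right sum_distrib_left cnj_sum
  by (subst sum.swap) (simp add: algebra_simps)

lemma cinner_sum_sum:
  "cinner k (\<lambda>c. \<Sum>i\<in>A. a i * u i c) (\<lambda>c. \<Sum>j\<in>B. b j * v j c) =
   (\<Sum>i\<in>A. \<Sum>j\<in>B. a i * cnj (b j) * cinner k (u i) (v j))"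
  unfolding cinner_sum_left cinner_sum_right by (simp add: sum_distrib_left mult.assoc)

lemma cinner_diff_left: "cinner k (\<lambda>c. x c - z c) y = cinner k x y - cinner k z y"
  unfolding cinner_def by (simp add: algebra_simps sum_subtractf)

lemma cinner_add_left: "cinner k (\<lambda>c. x c + z c) y = cinner k x y + cinner k z y"
  unfolding cinner_def by (simp add: algebra_simps sum.distrib)

lemma cinner_diff_right: "cinner k y (\<lambda>c. x c - z c) = cinner k y x - cinner k y z"
  unfolding cinner_def by (simp add: algebra_simps sum_subtractf)

lemma cinner_add_right: "cinner k y (\<lambda>c. x c + z c) = cinner k y x + cinner k y z"
  unfolding cinner_def by (simp add: algebra_simps sum.distrib)

lemma sqnorm_add_orthogonal:
  assumes "cinner k x y = 0"
  shows "sqnorm k (\<lambda>c. x c + y c) = sqnorm k x + sqnorm k y"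
proof -
  have "cinner k y x = 0" using assms by (subst cinner_commute_cnj) simp
  then have "cinner k (\<lambda>c. x c + y c) (\<lambda>c. x c + y c) = cinner k x x + cinner k y y"
    unfolding cinner_add_left cinner_add_right using assms by simp
  then show ?thesis unfolding sqnorm_eq_Re by simp
qed

section \<open>Backward Gram-Schmidt orthogonalisation\<close>

definition proj_coef :: "nat \<Rightarrow> (nat \<Rightarrow> complex) \<Rightarrow> (nat \<Rightarrow> complex) \<Rightarrow> complex" where
  "proj_coef k r q = (if sqnorm k q = 0 then 0 else cinner k r q / of_real (sqnorm k q))"

text \<open>Zero vectors
  are allowed (they arise exactly when a row depends linearly on the later rows).\<close>

fun gram_schmidt :: "nat \<Rightarrow> (nat \<Rightarrow> complex) list \<Rightarrow> (nat \<Rightarrow> complex) list" where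
  "gram_schmidt k [] = []"
| "gram_schmidt k (r # rs) = (let qs = gram_schmidt k rs in
     (\<lambda>c. r c - (\<Sum>j<length qs. proj_coef k r (qs!j) * (qs!j) c)) # qs)"

lemma gram_schmidt_length [simp]: "length (gram_schmidt k rs) = length rs"
  by (induction rs) (auto simp: Let_def)

text \<open>The process is compatible with dropping a prefix of the list; this is what makes the
  greedy, block-by-block construction possible.\<close>

lemma gram_schmidt_drop: "drop p (gram_schmidt k rs) = gram_schmidt k (drop p rs)"
proof (induction rs arbitrary: p)
  case Nil then show ?case by simp
next
  case (Cons r rs) then show ?case by (cases p) (auto simp: Let_def)
qed

lemma gram_schmidt_nth_drop:
  "p + i < length rs \<Longrightarrow> gram_schmidt k rs ! (p + i) = gram_schmidt k (drop p rs) ! i"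
proof -
  assume "p + i < length rs"
  then have "drop p (gram_schmidt k rs) ! i = gram_schmidt k rs ! (p + i)" by simp
  then show ?thesis by (simp add: gram_schmidt_drop)
qed

lemma sum_shift_greater:
  "(\<Sum>j<m - Suc i. f (Suc i + j)) = (\<Sum>j\<in>{i<..<m}. (f j :: 'a::comm_monoid_add))"
proof (cases "Suc i \<le> m")
  case True
  have "(\<Sum>j<m - Suc i. f (Suc i + j)) = (\<Sum>j\<in>{0..<m - Suc i}. f (j + Suc i))"
    by (simp add: lessThan_atLeast0 add.commute)
  also have "\<dots> = sum f {0 + Suc i..<(m - Suc i) + Suc i}"
    by (rule sum.shift_bounds_nat_ivl[symmetric])
  also have "{0 + Suc i..<(m - Suc i) + Suc i} = {i<..<m}" using True by auto
  finally show ?thesis .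
qed auto

lemma gram_schmidt_nth:
  assumes i: "i < length rs"
  shows "gram_schmidt k rs ! i =
   (\<lambda>c. (rs!i) c - (\<Sum>j\<in>{i<..<length rs}. proj_coef k (rs!i) (gram_schmidt k rs ! j) * (gram_schmidt k rs ! j) c))"
proof -
  let ?G = "gram_schmidt k rs"
  have d: "drop i rs = rs!i # drop (Suc i) rs" using i by (simp add: Cons_nth_drop_Suc)
  have "?G ! i = gram_schmidt k (drop i rs) ! 0" using gram_schmidt_nth_drop[of i 0 rs k] i by simp
  also have "\<dots> = (\<lambda>c. (rs!i) c - (\<Sum>j<length rs - Suc i. proj_coef k (rs!i) (?G ! (Suc i + j)) * (?G ! (Suc i + j)) c))"
    unfolding d using gram_schmidt_nth_drop[of "Suc i" _ rs k] by (auto simp: Let_def intro!: sum.cong)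
  also have "\<dots> = (\<lambda>c. (rs!i) c - (\<Sum>j\<in>{i<..<length rs}. proj_coef k (rs!i) (?G ! j) * (?G ! j) c))"
    by (subst sum_shift_greater[where f = "\<lambda>j. proj_coef k (rs!i) (?G ! j) * (?G ! j) _"]) (rule refl)
  finally show ?thesis .
qed

lemma gram_schmidt_supported:
  "\<forall>x\<in>set rs. supported k x \<Longrightarrow> \<forall>q\<in>set (gram_schmidt k rs). supported k q"
proof (induction rs)
  case (Cons r rs)
  then have h: "\<forall>q\<in>set (gram_schmidt k rs). supported k q" by simp
  have "supported k (\<lambda>c. r c - (\<Sum>j<length (gram_schmidt k rs). proj_coef k r (gram_schmidt k rs!j) * (gram_schmidt k rs!j) c))"
    using Cons.prems h unfolding supported_def by (auto intro!: sum.neutral)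
  then show ?case using h by (simp add: Let_def)
qed simp

lemma gram_schmidt_orthogonal:
  "i < length rs \<Longrightarrow> j < length rs \<Longrightarrow> i \<noteq> j \<Longrightarrow> cinner k (gram_schmidt k rs ! i) (gram_schmidt k rs ! j) = 0"
proof (induction rs arbitrary: i j)
  case Nil then show ?case by simp
next
  case (Cons r rs)
  define qs where "qs = gram_schmidt k rs"
  define q0 where "q0 = (\<lambda>c. r c - (\<Sum>j<length qs. proj_coef k r (qs!j) * (qs!j) c))"
  have g: "gram_schmidt k (r # rs) = q0 # qs" by (simp add: qs_def q0_def Let_def)
  have head_orth: "cinner k q0 (qs!t) = 0" if t: "t < length qs" for t
  proof -
    have "cinner k q0 (qs!t) = cinner k r (qs!t) - (\<Sum>j<length qs. proj_coef k r (qs!j) * cinner k (qs!j) (qs!t))"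
      unfolding q0_def cinner_diff_left cinner_sum_left ..
    also have "(\<Sum>j<length qs. proj_coef k r (qs!j) * cinner k (qs!j) (qs!t)) = proj_coef k r (qs!t) * cinner k (qs!t) (qs!t)"
      by (rule sum.remove[where x=t, THEN trans]) (use t Cons.IH in \<open>auto simp: qs_def intro!: sum.neutral\<close>)
    also have "cinner k r (qs!t) - proj_coef k r (qs!t) * cinner k (qs!t) (qs!t) = 0"
      by (cases "sqnorm k (qs!t) = 0") (auto simp: proj_coef_def cinner_self cinner_zero_right)
    finally show ?thesis .
  qed
  show ?case
  proof (cases i)
    case 0
    then obtain j' where "j = Suc j'" using Cons.prems by (cases j) auto
    then show ?thesis using 0 head_orth[of j'] Cons.prems unfolding g by (simp add: qs_def)
  next
    case (Suc i')
    show ?thesis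
    proof (cases j)
      case 0
      have "cinner k (qs!i') q0 = 0"
        using head_orth[of i'] Cons.prems Suc by (subst cinner_commute_cnj) (simp add: qs_def)
      then show ?thesis using Suc 0 unfolding g by simp
    next
      case (Suc j')
      then show ?thesis using \<open>i = Suc i'\<close> Cons.prems Cons.IH[of i' j'] unfolding g by (simp add: qs_def)
    qed
  qed
qed

text \<open>Each input vector is an upper-triangular combination (unit diagonal) of the output
  vectors.  This gives both the spanning property and the Gram determinant formula.\<close>

lemma gram_schmidt_decomp:
  assumes t: "t < length rs"
  shows "(rs!t) c = (\<Sum>j<length rs. (if j = t then 1 else if t < j then proj_coef k (rs!t) (gram_schmidt k rs!j) else 0) * (gram_schmidt k rs ! j) c)"
proof -
  let ?G = "gram_schmidt k rs"
  define \<alpha> where "\<alpha> j = (if j = t then 1 else if t < j then proj_coef k (rs!t) (?G!j) else 0)" for j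
  have disj: "{t<..<length rs} \<inter> {..<t} = {}" by auto
  have "{..<length rs} = insert t ({t<..<length rs} \<union> {..<t})" using t by auto
  then have "(\<Sum>j<length rs. \<alpha> j * (?G ! j) c) = \<alpha> t * (?G!t) c + ((\<Sum>j\<in>{t<..<length rs}. \<alpha> j * (?G ! j) c) + (\<Sum>j\<in>{..<t}. \<alpha> j * (?G ! j) c))"
    by (simp add: sum.union_disjoint disj)
  also have "\<dots> = (?G!t) c + (\<Sum>j\<in>{t<..<length rs}. proj_coef k (rs!t) (?G!j) * (?G ! j) c)"
    by (simp add: \<alpha>_def)
  also have "\<dots> = (rs!t) c" using gram_schmidt_nth[OF t, of k] by simp
  finally show ?thesis unfolding \<alpha>_def by simp
qed

lemma gram_schmidt_expansion:
  assumes supp: "\<forall>x\<in>set rs. supported k x"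
    and x: "\<And>c. x c = (\<Sum>j<length rs. \<beta> j * (gram_schmidt k rs ! j) c)"
  shows "x c = (\<Sum>j<length rs. proj_coef k x (gram_schmidt k rs ! j) * (gram_schmidt k rs ! j) c)"
proof -
  let ?G = "gram_schmidt k rs"
  have suppG: "supported k (?G!j)" if "j < length rs" for j
    using gram_schmidt_supported[OF supp] that by simp
  have "\<beta> j * (?G!j) c = proj_coef k x (?G!j) * (?G!j) c" if j: "j < length rs" for j
  proof (cases "sqnorm k (?G!j) = 0")
    case True
    then have "(?G!j) c = 0"
      using sqnorm_zero suppG[OF j] unfolding supported_def by (cases "c < k") auto
    then show ?thesis by simp
  next
    case False
    have xe: "x = (\<lambda>c. \<Sum>j<length rs. \<beta> j * (?G ! j) c)" using x by auto
    have "cinner k x (?G!j) = (\<Sum>i<length rs. \<beta> i * cinner k (?G ! i) (?G!j))"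
      unfolding xe cinner_sum_left ..
    also have "\<dots> = \<beta> j * cinner k (?G ! j) (?G!j)"
      by (rule sum.remove[where x=j, THEN trans]) (use j gram_schmidt_orthogonal in \<open>auto intro!: sum.neutral\<close>)
    finally have "proj_coef k x (?G!j) = \<beta> j" using False by (simp add: proj_coef_def cinner_self)
    then show ?thesis by simp
  qed
  then show ?thesis using x[of c] by (auto intro!: sum.cong)
qed

text \<open>Prepending the unit vectors makes the Gram-Schmidt vectors span all of \<open>\<complex>\<^sup>k\<close>, so every
  vector of \<open>\<complex>\<^sup>k\<close> is the sum of its projections onto them.\<close>

definition unit_vecs :: "nat \<Rightarrow> (nat \<Rightarrow> complex) list" where
  "unit_vecs k = map (\<lambda>c' c. if c = c' then 1 else 0) [0..<k]"

lemma length_unit_vecs [simp]: "length (unit_vecs k) = k"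
  by (simp add: unit_vecs_def)

lemma expansion_with_unit_vecs:
  assumes suppL: "\<forall>x\<in>set L. supported k x" and suppx: "supported k x"
  shows "x c = (\<Sum>j<k + length L. proj_coef k x (gram_schmidt k (unit_vecs k @ L) ! j) * (gram_schmidt k (unit_vecs k @ L) ! j) c)"
proof -
  let ?rs = "unit_vecs k @ L"
  let ?G = "gram_schmidt k ?rs"
  define \<alpha> where "\<alpha> c' j = (if j = c' then 1 else if c' < j then proj_coef k (?rs!c') (?G!j) else 0)" for c' j
  have e: "(?rs!c') c = (if c = c' then 1 else 0)" if "c' < k" for c' c
    using that by (simp add: unit_vecs_def nth_append)
  have unit_exp: "(?rs!c') c = (\<Sum>j<length ?rs. \<alpha> c' j * (?G ! j) c)" if "c' < k" for c' c
    unfolding \<alpha>_def by (rule gram_schmidt_decomp) (use that in simp)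
  have in_span: "x c = (\<Sum>j<length ?rs. (\<Sum>c'<k. x c' * \<alpha> c' j) * (?G ! j) c)" for c
  proof -
    have "x c = (\<Sum>c'<k. x c' * (?rs!c') c)"
    proof (cases "c < k")
      case True
      then have "(\<Sum>c'<k. x c' * (?rs!c') c) = x c * (?rs!c) c"
        by (intro sum.remove[where x=c, THEN trans]) (auto simp: e intro!: sum.neutral)
      then show ?thesis using True e by simp
    next
      case False
      then show ?thesis using suppx unfolding supported_def by (auto simp: e intro!: sum.neutral)
    qed
    also have "\<dots> = (\<Sum>c'<k. x c' * (\<Sum>j<length ?rs. \<alpha> c' j * (?G ! j) c))"
      by (auto intro!: sum.cong simp: unit_exp)
    also have "\<dots> = (\<Sum>j<length ?rs. (\<Sum>c'<k. x c' * \<alpha> c' j) * (?G ! j) c)"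
      unfolding sum_distrib_left sum_distrib_right by (subst sum.swap) (simp add: mult.assoc)
    finally show ?thesis .
  qed
  have supp: "\<forall>x\<in>set ?rs. supported k x" using suppL by (auto simp: unit_vecs_def supported_def)
  show ?thesis using gram_schmidt_expansion[OF supp in_span, of c] by simp
qed

lemma sum_lessThan_add: "(\<Sum>j<(k::nat)+d. f j) = (\<Sum>j<k. f j) + (\<Sum>j<d. (f (k+j) :: 'a :: comm_monoid_add))"
  by (induction d) (simp_all add: add.assoc)

section \<open>Bessel's inequality and the projection bound\<close>

definition normalized :: "nat \<Rightarrow> (nat \<Rightarrow> complex) \<Rightarrow> (nat \<Rightarrow> complex)" where
  "normalized k q = (\<lambda>c. q c / of_real (sqrt (sqnorm k q)))"

lemma cinner_normalize_right: "cinner k x (normalized k q) = cinner k x q / of_real (sqrt (sqnorm k q))"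
  unfolding cinner_def normalized_def by (simp add: sum_divide_distrib)

lemma cinner_normalize_left: "cinner k (normalized k q) x = cinner k q x / of_real (sqrt (sqnorm k q))"
  unfolding cinner_def normalized_def by (simp add: sum_divide_distrib)

lemma cinner_normalize_self: "sqnorm k q \<noteq> 0 \<Longrightarrow> cinner k (normalized k q) (normalized k q) = 1"
proof -
  assume h: "sqnorm k q \<noteq> 0"
  have "sqnorm k q > 0" using h sqnorm_nonneg[of k q] by linarith
  then have "of_real (sqrt (sqnorm k q)) * of_real (sqrt (sqnorm k q)) = (of_real (sqnorm k q) :: complex)"
    unfolding of_real_mult[symmetric] by simp
  moreover have "cinner k (normalized k q) (normalized k q) =
      cinner k q q / (of_real (sqrt (sqnorm k q)) * of_real (sqrt (sqnorm k q)))"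
    unfolding cinner_normalize_left cinner_normalize_right by simp
  ultimately show ?thesis unfolding cinner_self using h by simp
qed

lemma gram_schmidt_orthonormal:
  assumes "i < length rs" "j < length rs" "sqnorm k (gram_schmidt k rs ! i) \<noteq> 0" "sqnorm k (gram_schmidt k rs ! j) \<noteq> 0"
  shows "cinner k (normalized k (gram_schmidt k rs ! i)) (normalized k (gram_schmidt k rs ! j)) = (if i = j then 1 else 0)"
  using assms gram_schmidt_orthogonal[of i rs j k] cinner_normalize_self
  by (auto simp: cinner_normalize_left cinner_normalize_right)

lemma bessel_inequality:
  assumes fin: "finite I"
    and on: "\<And>i j. i \<in> I \<Longrightarrow> j \<in> I \<Longrightarrow> cinner k (f i) (f j) = (if i = j then 1 else 0)"
  shows "(\<Sum>i\<in>I. (cmod (cinner k x (f i)))^2) \<le> sqnorm k x"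
proof -
  define a where "a i = cinner k x (f i)" for i
  define y where "y = (\<lambda>c. \<Sum>i\<in>I. a i * f i c)"
  define S where "S = (\<Sum>i\<in>I. (cmod (a i))^2)"
  have aa: "a i * cnj (a i) = of_real ((cmod (a i))^2)" for i by (rule complex_norm_square[symmetric])
  have xy: "cinner k x y = of_real S"
    unfolding y_def cinner_sum_right S_def of_real_sum
  proof (rule sum.cong[OF refl])
    fix i show "cnj (a i) * cinner k x (f i) = of_real ((cmod (a i))^2)"
      unfolding a_def[symmetric] aa[symmetric] by (simp add: mult.commute)
  qed
  have yx: "cinner k y x = of_real S" using xy by (subst cinner_commute_cnj) simp
  have yy: "cinner k y y = of_real S"
  proof -
    have "cinner k y y = (\<Sum>i\<in>I. \<Sum>j\<in>I. a i * cnj (a j) * cinner k (f i) (f j))"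
      unfolding y_def cinner_sum_sum ..
    also have "\<dots> = (\<Sum>i\<in>I. a i * cnj (a i))"
    proof (rule sum.cong[OF refl])
      fix i assume i: "i \<in> I"
      show "(\<Sum>j\<in>I. a i * cnj (a j) * cinner k (f i) (f j)) = a i * cnj (a i)"
        by (rule sum.remove[where x=i, THEN trans]) (use i fin on in \<open>auto intro!: sum.neutral split: if_splits\<close>)
    qed
    also have "\<dots> = of_real S" unfolding S_def of_real_sum aa ..
    finally show ?thesis .
  qed
  have "cinner k (\<lambda>c. x c - y c) (\<lambda>c. x c - y c) = cinner k x x - of_real S"
    unfolding cinner_diff_left cinner_diff_right xy yx yy by simp
  then have "sqnorm k (\<lambda>c. x c - y c) = sqnorm k x - S"
    unfolding sqnorm_eq_Re by simp
  then show ?thesis using sqnorm_nonneg[of k "\<lambda>c. x c - y c"] unfolding S_def a_def by linarith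
qed

text \<open>An orthonormal family in \<open>\<complex>\<^sup>k\<close> has at most \<open>k\<close> members (Bessel against the unit vectors).\<close>

lemma card_orthonormal_le:
  assumes fin: "finite I"
    and on: "\<And>i j. i \<in> I \<Longrightarrow> j \<in> I \<Longrightarrow> cinner k (f i) (f j) = (if i = j then 1 else 0)"
  shows "card I \<le> k"
proof -
  define e :: "nat \<Rightarrow> nat \<Rightarrow> complex" where "e c' = (\<lambda>c. if c = c' then 1 else 0 :: complex)" for c'
  have ie: "cinner k (e c) g = cnj (g c)" if "c < k" for c g
    unfolding cinner_def e_def using that by (subst sum.remove[where x=c]) (auto intro!: sum.neutral)
  have ne: "sqnorm k (e c) = 1" if "c < k" for c
    unfolding sqnorm_def e_def using that by (subst sum.remove[where x=c]) (auto intro!: sum.neutral)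
  have "real (card I) = (\<Sum>i\<in>I. sqnorm k (f i))"
    using on by (simp add: sqnorm_eq_Re)
  also have "\<dots> = (\<Sum>c<k. \<Sum>i\<in>I. (cmod (cinner k (e c) (f i)))^2)"
    unfolding sqnorm_def by (subst sum.swap) (auto intro!: sum.cong simp: ie)
  also have "\<dots> \<le> (\<Sum>c<k. sqnorm k (e c))"
    by (rule sum_mono) (rule bessel_inequality[OF fin on])
  also have "\<dots> = real k" by (simp add: ne)
  finally show ?thesis by simp
qed

text \<open>The indices \<open>s < k\<close> with nonzero Gram-Schmidt vector of \<open>unit_vecs k @ L\<close> give an
  orthonormal basis of the orthogonal complement of \<open>L\<close>; if the Gram-Schmidt vectors of
  \<open>L\<close> are all nonzero, there are at most \<open>k - length L\<close> of them.\<close>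

definition complement_indices :: "nat \<Rightarrow> (nat \<Rightarrow> complex) list \<Rightarrow> nat set" where
  "complement_indices k L = {s. s < k \<and> sqnorm k (gram_schmidt k (unit_vecs k @ L) ! s) \<noteq> 0}"

lemma card_complement_indices:
  assumes nz: "\<forall>q\<in>set (gram_schmidt k L). sqnorm k q \<noteq> 0"
  shows "card (complement_indices k L) + length L \<le> k"
proof -
  let ?G = "gram_schmidt k (unit_vecs k @ L)"
  define I where "I = {s. s < k + length L \<and> sqnorm k (?G ! s) \<noteq> 0}"
  have Gk: "?G ! (k + j) = gram_schmidt k L ! j" if "j < length L" for j
    using gram_schmidt_nth_drop[of k j "unit_vecs k @ L"] that by simp
  have "{k..<k + length L} \<subseteq> I"
  proof
    fix s assume s: "s \<in> {k..<k + length L}"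
    then have "?G ! s = gram_schmidt k L ! (s - k)" using Gk[of "s - k"] by auto
    moreover have "gram_schmidt k L ! (s - k) \<in> set (gram_schmidt k L)" using s by auto
    ultimately show "s \<in> I" using nz s unfolding I_def by auto
  qed
  then have IU: "I = complement_indices k L \<union> {k..<k + length L}"
    unfolding I_def complement_indices_def by auto
  have "card I \<le> k"
    by (rule card_orthonormal_le[where f = "\<lambda>s. normalized k (?G ! s)"]) (auto simp: I_def gram_schmidt_orthonormal)
  moreover have "card I = card (complement_indices k L) + length L"
    unfolding IU by (subst card_Un_disjoint) (auto simp: complement_indices_def)
  ultimately show ?thesis by simp
qed

lemma sqnorm_partial_expansion:
  assumes m: "m \<le> length rs"
  shows "sqnorm k (\<lambda>c. \<Sum>j<m. proj_coef k x (gram_schmidt k rs ! j) * (gram_schmidt k rs ! j) c) =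
    (\<Sum>s\<in>{s. s < m \<and> sqnorm k (gram_schmidt k rs ! s) \<noteq> 0}. (cmod (cinner k x (normalized k (gram_schmidt k rs ! s))))^2)"
proof -
  let ?G = "gram_schmidt k rs"
  define F where "F = {s. s < m \<and> sqnorm k (?G ! s) \<noteq> 0}"
  define diag_term where "diag_term s = proj_coef k x (?G!s) * cnj (proj_coef k x (?G!s)) * cinner k (?G!s) (?G!s)" for s
  have diag: "(\<Sum>t<m. proj_coef k x (?G!s) * cnj (proj_coef k x (?G!t)) * cinner k (?G!s) (?G!t)) = diag_term s"
    if s: "s < m" for s
    unfolding diag_term_def
    by (rule sum.remove[where x=s, THEN trans]) (use s m gram_schmidt_orthogonal[of s rs _ k] in \<open>auto intro!: sum.neutral\<close>)
  have diag_term_eq: "diag_term s = (if s \<in> F then of_real ((cmod (cinner k x (normalized k (?G!s))))^2) else 0)"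
    if s: "s < m" for s
  proof (cases "sqnorm k (?G!s) = 0")
    case True then show ?thesis by (simp add: diag_term_def proj_coef_def F_def)
  next
    case False
    define a where "a = sqnorm k (?G!s)"
    define z where "z = cinner k x (?G!s)"
    have a: "a > 0" using False sqnorm_nonneg[of k "?G!s"] a_def by linarith
    have "(cmod (cinner k x (normalized k (?G!s))))^2 = (cmod z)^2 / a"
      unfolding cinner_normalize_right z_def[symmetric] a_def[symmetric] using a
      by (simp add: norm_divide power_divide)
    moreover have "diag_term s = z * cnj z / of_real a"
      unfolding diag_term_def proj_coef_def cinner_self a_def[symmetric] z_def[symmetric] using a by (simp add: field_simps)
    moreover have zz: "z * cnj z = (complex_of_real (cmod z))^2"
      using complex_norm_square[of z] unfolding of_real_power by simp
    ultimately show ?thesis using False s by (simp add: F_def zz)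
  qed
  have "cinner k (\<lambda>c. \<Sum>j<m. proj_coef k x (?G!j) * (?G!j) c) (\<lambda>c. \<Sum>j<m. proj_coef k x (?G!j) * (?G!j) c)
      = (\<Sum>s<m. diag_term s)"
    unfolding cinner_sum_sum by (auto intro!: sum.cong simp: diag)
  also have "\<dots> = (\<Sum>s<m. if s \<in> F then of_real ((cmod (cinner k x (normalized k (?G!s))))^2) else 0)"
    by (auto intro!: sum.cong simp: diag_term_eq)
  also have "\<dots> = (\<Sum>s\<in>F. of_real ((cmod (cinner k x (normalized k (?G!s))))^2))"
    by (subst sum.If_cases) (auto simp: F_def intro!: sum.cong)
  finally show ?thesis unfolding sqnorm_eq_Re F_def by (simp add: Re_sum)
qed

text \<open>Projection bound: the squared length of the Gram-Schmidt vector of \<open>xs ! i\<close> in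
  \<open>xs @ L\<close> is at most the energy of \<open>xs ! i\<close> along the orthogonal complement of \<open>L\<close>.
  (It is the component of \<open>xs ! i\<close> orthogonal to a space containing \<open>span L\<close>.)\<close>

lemma gram_schmidt_sqnorm_le_complement:
  assumes suppL: "\<forall>x\<in>set L. supported k x" and suppxs: "\<forall>x\<in>set xs. supported k x" and i: "i < length xs"
  shows "sqnorm k (gram_schmidt k (xs @ L) ! i) \<le>
    (\<Sum>s\<in>complement_indices k L. (cmod (cinner k (xs!i) (normalized k (gram_schmidt k (unit_vecs k @ L) ! s))))^2)"
proof -
  let ?G = "gram_schmidt k (unit_vecs k @ L)"
  let ?P = "gram_schmidt k (xs @ L)"
  define x where "x = xs ! i"
  define q where "q = ?P ! i"
  define nx where "nx = length xs"
  define d where "d = length L"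
  have suppx: "supported k x" using suppxs i x_def by auto
  have il: "i < length (xs @ L)" using i by simp
  have Gk: "?G ! (k + j) = gram_schmidt k L ! j" if "j < d" for j
    using gram_schmidt_nth_drop[of k j "unit_vecs k @ L"] that d_def by simp
  have Pk: "?P ! (nx + j) = gram_schmidt k L ! j" if "j < d" for j
    using gram_schmidt_nth_drop[of nx j "xs @ L"] that d_def nx_def by simp
  \<comment> \<open>\<open>g\<close>: the part of \<open>x\<close> along the complement of \<open>L\<close>; it splits orthogonally as \<open>q + h\<close>\<close>
  define g where "g = (\<lambda>c. \<Sum>j<k. proj_coef k x (?G!j) * (?G!j) c)"
  define h where "h = (\<lambda>c. (\<Sum>j\<in>{i<..<nx + d}. proj_coef k x (?P!j) * (?P!j) c) - (\<Sum>j<d. proj_coef k x (?P!(nx+j)) * (?P!(nx+j)) c))"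
  have x1: "x c = q c + (\<Sum>j\<in>{i<..<nx + d}. proj_coef k x (?P!j) * (?P!j) c)" for c
    using gram_schmidt_nth[OF il, of k] unfolding q_def x_def nx_def d_def by (simp add: nth_append i)
  have x2: "x c = g c + (\<Sum>j<d. proj_coef k x (?P!(nx+j)) * (?P!(nx+j)) c)" for c
  proof -
    have "x c = (\<Sum>j<k + d. proj_coef k x (?G ! j) * (?G ! j) c)"
      using expansion_with_unit_vecs[OF suppL suppx, of c] d_def by simp
    also have "\<dots> = g c + (\<Sum>j<d. proj_coef k x (?G!(k+j)) * (?G!(k+j)) c)"
      unfolding g_def by (rule sum_lessThan_add)
    also have "(\<Sum>j<d. proj_coef k x (?G!(k+j)) * (?G!(k+j)) c) = (\<Sum>j<d. proj_coef k x (?P!(nx+j)) * (?P!(nx+j)) c)"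
      by (rule sum.cong) (auto simp: Gk Pk)
    finally show ?thesis .
  qed
  have g_split: "g = (\<lambda>c. q c + h c)" using x1 x2 unfolding h_def by (auto simp: algebra_simps)
  have qP: "cinner k q (?P!j) = 0" if "i < j" "j < nx + d" for j
    unfolding q_def using gram_schmidt_orthogonal[of i "xs @ L" j k] that i nx_def d_def by simp
  have qh: "cinner k q h = 0"
  proof -
    have s1: "(\<Sum>j\<in>{i<..<nx+d}. cnj (proj_coef k x (?P!j)) * cinner k q (?P!j)) = 0"
      by (rule sum.neutral) (auto simp: qP)
    have s2: "(\<Sum>j<d. cnj (proj_coef k x (?P!(nx+j))) * cinner k q (?P!(nx+j))) = 0"
      by (rule sum.neutral) (use qP i nx_def in auto)
    show ?thesis unfolding h_def cinner_diff_right cinner_sum_right s1 s2 by simp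
  qed
  have "sqnorm k g = sqnorm k q + sqnorm k h"
    unfolding g_split by (rule sqnorm_add_orthogonal[OF qh])
  moreover have "sqnorm k g = (\<Sum>s\<in>complement_indices k L. (cmod (cinner k x (normalized k (?G!s))))^2)"
    unfolding g_def complement_indices_def by (rule sqnorm_partial_expansion) simp
  ultimately show ?thesis using sqnorm_nonneg[of k h] unfolding q_def x_def by linarith
qed

section \<open>Dirichlet's pigeonhole principle\<close>

lemma cell_index_bounds:
  fixes y :: real and m :: nat
  assumes "0 \<le> y" "y \<le> m" "m \<ge> 1"
  shows "real (min (m - 1) (nat \<lfloor>y\<rfloor>)) \<le> y \<and> y \<le> real (min (m - 1) (nat \<lfloor>y\<rfloor>)) + 1"
proof (cases "nat \<lfloor>y\<rfloor> \<le> m - 1")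
  case True
  then have "min (m - 1) (nat \<lfloor>y\<rfloor>) = nat \<lfloor>y\<rfloor>" by simp
  moreover have "real (nat \<lfloor>y\<rfloor>) = of_int \<lfloor>y\<rfloor>" using assms by simp
  ultimately show ?thesis by (simp add: of_int_floor_le)
next
  case False
  then have "min (m - 1) (nat \<lfloor>y\<rfloor>) = m - 1" by simp
  moreover have "real (m - 1) = real m - 1" using assms by simp
  moreover have "real (m - 1) \<le> y"
  proof -
    have "int (m - 1) < \<lfloor>y\<rfloor>" using False by (simp add: zless_nat_eq_int_zless)
    then show ?thesis by linarith
  qed
  ultimately show ?thesis using assms by simp
qed

lemma pigeonhole_close_pair:
  fixes g :: "'s \<Rightarrow> 'b \<Rightarrow> real"
  assumes finS: "finite S" and m: "m \<ge> 1" and A: "A > 0"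
    and bound: "\<And>s b. s \<in> S \<Longrightarrow> b \<in> P \<Longrightarrow> \<bar>g s b\<bar> \<le> A"
    and many: "m ^ card S < card P"
  shows "\<exists>b1\<in>P. \<exists>b2\<in>P. b1 \<noteq> b2 \<and> (\<forall>s\<in>S. \<bar>g s b1 - g s b2\<bar> \<le> 2 * A / m)"
proof -
  define y where "y s b = (g s b + A) * m / (2 * A)" for s b
  have y_range: "0 \<le> y s b \<and> y s b \<le> m" if "s \<in> S" "b \<in> P" for s b
  proof -
    have h1: "0 \<le> g s b + A" "g s b + A \<le> 2*A" using bound[OF that] by linarith+
    then have "(g s b + A) * m \<le> (2*A) * m" by (simp add: mult_right_mono)
    then show ?thesis unfolding y_def using h1 A by (simp add: pos_divide_le_eq mult.commute)
  qed
  define cell where "cell b = (\<lambda>s\<in>S. min (m - 1) (nat \<lfloor>y s b\<rfloor>))" for b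
  have "cell ` P \<subseteq> PiE S (\<lambda>_. {..<m})"
    unfolding cell_def using m by (auto simp: PiE_iff)
  moreover have "card (PiE S (\<lambda>_. {..<m})) < card P"
    using finS many by (simp add: card_PiE)
  ultimately have "\<not> inj_on cell P"
    using card_inj_on_le[of cell P "PiE S (\<lambda>_. {..<m})"] finS by (auto simp: finite_PiE)
  then obtain b1 b2 where b: "b1 \<in> P" "b2 \<in> P" "b1 \<noteq> b2" and same_cell: "cell b1 = cell b2"
    unfolding inj_on_def by blast
  have "\<bar>g s b1 - g s b2\<bar> \<le> 2 * A / m" if s: "s \<in> S" for s
  proof -
    have "min (m - 1) (nat \<lfloor>y s b1\<rfloor>) = min (m - 1) (nat \<lfloor>y s b2\<rfloor>)"
      using fun_cong[OF same_cell, of s] s unfolding cell_def by simp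
    then have "\<bar>y s b1 - y s b2\<bar> \<le> 1"
      using cell_index_bounds[OF _ _ m, of "y s b1"] cell_index_bounds[OF _ _ m, of "y s b2"]
        y_range[OF s b(1)] y_range[OF s b(2)] by linarith
    moreover have "y s b1 - y s b2 = (g s b1 - g s b2) * m / (2 * A)"
      unfolding y_def by (simp add: diff_divide_distrib[symmetric] algebra_simps)
    ultimately have "\<bar>g s b1 - g s b2\<bar> * m / (2 * A) \<le> 1" using A by (simp add: abs_mult abs_divide)
    then show ?thesis using A m by (simp add: field_simps)
  qed
  then show ?thesis using b by blast
qed

lemma abs_int_combination_le:
  assumes "\<forall>t\<in>T. - int N \<le> b t \<and> b t \<le> int N"
  shows "\<bar>\<Sum>t\<in>T. of_int (b t) * w t\<bar> \<le> real N * (\<Sum>t\<in>T. \<bar>w t\<bar>)"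
proof -
  have "\<bar>\<Sum>t\<in>T. of_int (b t) * w t\<bar> \<le> (\<Sum>t\<in>T. \<bar>of_int (b t) * w t\<bar>)" by (rule sum_abs)
  also have "\<dots> \<le> (\<Sum>t\<in>T. real N * \<bar>w t\<bar>)"
  proof (rule sum_mono)
    fix t assume "t \<in> T"
    then have "\<bar>real_of_int (b t)\<bar> \<le> real N" using assms by auto
    then show "\<bar>of_int (b t) * w t\<bar> \<le> real N * \<bar>w t\<bar>" by (simp add: abs_mult mult_right_mono)
  qed
  finally show ?thesis by (simp add: sum_distrib_left)
qed

lemma nat_floor_ge_half:
  fixes x :: real
  assumes "x \<ge> 1"
  shows "real (nat \<lfloor>x\<rfloor>) \<ge> x / 2"
proof -
  have "real (nat \<lfloor>x\<rfloor>) = of_int \<lfloor>x\<rfloor>" using assms by simp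
  moreover have "of_int \<lfloor>x\<rfloor> > x - 1" by linarith
  moreover have "(of_int \<lfloor>x\<rfloor> :: real) \<ge> 1" using assms by simp
  ultimately show ?thesis by linarith
qed

text \<open>The counting behind Dirichlet's principle: with \<open>m = \<lfloor>N^{r/D}\<rfloor>\<close> there are fewer cells
  \<open>m^c \<le> m^D \<le> N^r\<close> than points \<open>(N+1)^r\<close> of the cube \<open>{0..N}^r\<close>.\<close>

lemma cells_fewer_than_points:
  fixes N r D c :: nat
  assumes N: "N \<ge> 1" and r: "r \<ge> 1" and D: "D \<ge> 1" and c: "c \<le> D"
  shows "nat \<lfloor>real N powr (r / D)\<rfloor> ^ c < (N + 1) ^ r"
proof -
  define x where "x = real N powr (r / D)"
  define m where "m = nat \<lfloor>x\<rfloor>"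
  have "x \<ge> 1" unfolding x_def using N by (intro ge_one_powr_ge_zero) auto
  then have m1: "m \<ge> 1" and mx: "real m \<le> x" unfolding m_def by (simp_all add: le_nat_iff)
  have "m ^ c \<le> m ^ D" using m1 c by (simp add: power_increasing)
  then have "real (m ^ c) \<le> real m ^ D" by (metis of_nat_le_iff of_nat_power)
  also have "\<dots> \<le> x ^ D" using mx by (simp add: power_mono)
  also have "x ^ D = real N ^ r" unfolding x_def using N D by (simp add: powr_realpow[symmetric] powr_powr)
  also have "real N ^ r < real (N + 1) ^ r" using r by (intro power_strict_mono) auto
  finally show ?thesis unfolding m_def x_def by (metis of_nat_less_iff of_nat_power)
qed

lemma dirichlet_approximation:
  fixes S :: "'s set" and w :: "'s \<Rightarrow> nat \<Rightarrow> real" and r D N :: nat and W :: real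
  assumes finS: "finite S" and cS: "card S \<le> D" and D: "D \<ge> 1" and N: "N \<ge> 1" and r: "r \<ge> 1" and W: "W > 0"
    and mass: "\<And>s. s \<in> S \<Longrightarrow> (\<Sum>t\<in>{1..r}. \<bar>w s t\<bar>) \<le> W"
  shows "\<exists>b::nat\<Rightarrow>int. (\<forall>i\<in>{1..r}. - int N \<le> b i \<and> b i \<le> int N) \<and> (\<exists>i\<in>{1..r}. b i \<noteq> 0) \<and>
     (\<forall>s\<in>S. \<bar>\<Sum>t\<in>{1..r}. of_int (b t) * w s t\<bar> \<le> 4 * N * W * N powr (- (r / D)))"
proof -
  define A where "A = N * W"
  have A: "A > 0" using N W by (simp add: A_def)
  define x where "x = real N powr (r / D)"
  have x1: "x \<ge> 1" unfolding x_def using N by (intro ge_one_powr_ge_zero) auto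
  define m where "m = nat \<lfloor>x\<rfloor>"
  have m1: "m \<ge> 1" unfolding m_def using x1 by (simp add: le_nat_iff)
  define g where "g s b = (\<Sum>t\<in>{1..r}. of_int (b t) * w s t)" for s and b :: "nat \<Rightarrow> int"
  define P where "P = PiE {1..r} (\<lambda>_. {0..int N})"
  have "\<bar>g s b\<bar> \<le> A" if s: "s \<in> S" and b: "b \<in> P" for s b
  proof -
    have "\<forall>t\<in>{1..r}. - int N \<le> b t \<and> b t \<le> int N" using b unfolding P_def by (force simp: PiE_iff)
    then have "\<bar>g s b\<bar> \<le> real N * (\<Sum>t\<in>{1..r}. \<bar>w s t\<bar>)" unfolding g_def by (rule abs_int_combination_le)
    also have "\<dots> \<le> A" unfolding A_def using mass[OF s] by (simp add: mult_left_mono)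
    finally show ?thesis .
  qed
  moreover have "m ^ card S < card P"
    unfolding m_def x_def P_def using cells_fewer_than_points[OF N r D cS] by (simp add: card_PiE nat_add_distrib)
  ultimately have "\<exists>b1\<in>P. \<exists>b2\<in>P. b1 \<noteq> b2 \<and> (\<forall>s\<in>S. \<bar>g s b1 - g s b2\<bar> \<le> 2 * A / m)"
    by (intro pigeonhole_close_pair[OF finS m1 A])
  then obtain b1 b2 where b: "b1 \<in> P" "b2 \<in> P" "b1 \<noteq> b2" and close: "\<forall>s\<in>S. \<bar>g s b1 - g s b2\<bar> \<le> 2 * A / m"
    by blast
  \<comment> \<open>the difference of the two points is the required solution\<close>
  define b where "b i = b1 i - b2 i" for i
  have b_range: "\<forall>i\<in>{1..r}. - int N \<le> b i \<and> b i \<le> int N"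
    using b unfolding P_def b_def by (force simp: PiE_iff)
  have b_nonzero: "\<exists>i\<in>{1..r}. b i \<noteq> 0"
  proof (rule ccontr)
    assume "\<not> ?thesis"
    then have "b1 = b2" using b unfolding P_def b_def by (auto simp: PiE_iff extensional_def fun_eq_iff)
    then show False using b by simp
  qed
  have "\<bar>g s b\<bar> \<le> 4 * N * W * N powr (- (r / D))" if s: "s \<in> S" for s
  proof -
    have "g s b = g s b1 - g s b2"
      unfolding g_def b_def by (simp add: sum_subtractf[symmetric] left_diff_distrib)
    then have "\<bar>g s b\<bar> \<le> 2 * A / m" using close s by simp
    also have "\<dots> \<le> 2 * A / (x / 2)"
      using A x1 nat_floor_ge_half[OF x1] unfolding m_def by (intro divide_left_mono) auto
    also have "\<dots> = 4 * N * W * N powr (- (r / D))"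
      unfolding x_def A_def using N by (simp add: powr_minus field_simps)
    finally show ?thesis .
  qed
  then show ?thesis using b_range b_nonzero unfolding g_def by blast
qed

section \<open>The Gram determinant\<close>

definition row_fun :: "nat \<Rightarrow> complex mat \<Rightarrow> nat \<Rightarrow> (nat \<Rightarrow> complex)" where
  "row_fun k M i = (\<lambda>c. if c < k then M $$ (i, c) else 0)"

definition row_funs :: "nat \<Rightarrow> complex mat \<Rightarrow> (nat \<Rightarrow> complex) list" where
  "row_funs k M = map (row_fun k M) [0..<dim_row M]"

lemma row_funs_supported: "\<forall>x\<in>set (row_funs k M). supported k x"
  unfolding row_funs_def row_fun_def supported_def by auto

lemma length_row_funs [simp]: "length (row_funs k M) = dim_row M"
  unfolding row_funs_def by simp

lemma nth_row_funs [simp]: "i < dim_row M \<Longrightarrow> row_funs k M ! i = row_fun k M i"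
  unfolding row_funs_def by simp

lemma mult_mat_index:
  assumes "i < dim_row A" "j < dim_col B" "dim_col A = dim_row B"
  shows "(A * B) $$ (i,j) = (\<Sum>l<dim_col A. A $$ (i,l) * B $$ (l,j))"
  using assms by (simp add: scalar_prod_def lessThan_atLeast0)

lemma ctrans_carrier: "A \<in> carrier_mat n m \<Longrightarrow> ctrans A \<in> carrier_mat m n"
  unfolding ctrans_def by auto

lemma ctrans_index: "i < dim_col A \<Longrightarrow> j < dim_row A \<Longrightarrow> ctrans A $$ (i,j) = cnj (A $$ (j,i))"
  unfolding ctrans_def by simp

lemma ctrans_mult:
  assumes A: "A \<in> carrier_mat n m" and B: "B \<in> carrier_mat m p"
  shows "ctrans (A * B) = ctrans B * ctrans A"
proof (rule eq_matI)
  show "dim_row (ctrans (A * B)) = dim_row (ctrans B * ctrans A)"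
    "dim_col (ctrans (A * B)) = dim_col (ctrans B * ctrans A)"
    using A B by (simp_all add: ctrans_def)
  fix i j assume "i < dim_row (ctrans B * ctrans A)" and "j < dim_col (ctrans B * ctrans A)"
  then have "i < p" and "j < n" using A B by (simp_all add: ctrans_def)
  then show "ctrans (A * B) $$ (i, j) = (ctrans B * ctrans A) $$ (i, j)"
    using A B by (simp add: ctrans_def scalar_prod_def cnj_sum mult.commute)
qed

lemma det_unit_triangular_conj:
  assumes T: "T \<in> carrier_mat m m" and D: "D \<in> carrier_mat m m"
    and upper: "upper_triangular T" and unit: "\<And>i. i < m \<Longrightarrow> T $$ (i,i) = 1"
  shows "det (T * D * ctrans T) = det D"
proof -
  have Tc: "ctrans T \<in> carrier_mat m m" by (rule ctrans_carrier[OF T])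
  have "det T = prod_list (diag_mat T)" by (rule det_upper_triangular[OF upper T])
  also have "\<dots> = 1" unfolding prod_list_diag_prod using T unit by simp
  finally have "det T = 1" .
  moreover have "det (ctrans T) = prod_list (diag_mat (ctrans T))"
    by (rule det_lower_triangular[OF _ Tc]) (use T upper in \<open>auto simp: ctrans_def upper_triangular_def\<close>)
  moreover have "\<dots> = 1" unfolding prod_list_diag_prod using T unit by (simp add: ctrans_def)
  ultimately show ?thesis using T D Tc by (simp add: det_mult[of _ m])
qed

text \<open>Indeed \<open>M = T Q\<close> with \<open>T\<close> unit upper triangular and
  \<open>Q\<close> having orthogonal rows, so \<open>M M\<^sup>\<dagger> = T (Q Q\<^sup>\<dagger>) T\<^sup>\<dagger>\<close> with \<open>Q Q\<^sup>\<dagger>\<close> diagonal.\<close>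

lemma gram_determinant:
  assumes M: "M \<in> carrier_mat m k"
  shows "det (M * ctrans M) = of_real (\<Prod>a<m. sqnorm k (gram_schmidt k (row_funs k M) ! a))"
proof -
  let ?rs = "row_funs k M"
  let ?G = "gram_schmidt k ?rs"
  have len: "length ?rs = m" using M by simp
  define Q where "Q = mat m k (\<lambda>(a,c). (?G!a) c)"
  define T where "T = mat m m (\<lambda>(a,b). if a = b then 1 else if a < b then proj_coef k (?rs!a) (?G!b) else 0)"
  have Q: "Q \<in> carrier_mat m k" and T: "T \<in> carrier_mat m m" unfolding Q_def T_def by auto
  have QQ: "Q * ctrans Q \<in> carrier_mat m m" using Q ctrans_carrier[OF Q] by simp
  have MTQ: "M = T * Q"
  proof (rule eq_matI)
    fix a c assume "a < dim_row (T * Q)" and "c < dim_col (T * Q)"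
    then have a: "a < m" and c: "c < k" using Q T by auto
    have "(T * Q) $$ (a, c) = (\<Sum>j<m. T $$ (a,j) * Q $$ (j,c))"
      using Q T a c by (subst mult_mat_index) auto
    also have "\<dots> = (?rs!a) c"
      using gram_schmidt_decomp[of a ?rs c k] a c len unfolding T_def Q_def by (auto intro!: sum.cong)
    also have "\<dots> = M $$ (a, c)" using a c M by (simp add: row_fun_def)
    finally show "M $$ (a, c) = (T * Q) $$ (a, c)" ..
  qed (use M Q T in auto)
  have QQ_index: "(Q * ctrans Q) $$ (a,b) = (if a = b then of_real (sqnorm k (?G!a)) else 0)"
    if "a < m" "b < m" for a b
  proof -
    have "(Q * ctrans Q) $$ (a,b) = (\<Sum>l<k. Q $$ (a,l) * ctrans Q $$ (l,b))"
      using that Q ctrans_carrier[OF Q] by (subst mult_mat_index) auto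
    also have "\<dots> = cinner k (?G!a) (?G!b)"
      unfolding cinner_def using that Q by (auto intro!: sum.cong simp: ctrans_index Q_def)
    also have "\<dots> = (if a = b then of_real (sqnorm k (?G!a)) else 0)"
      using gram_schmidt_orthogonal[of a ?rs b k] that len by (simp add: cinner_self)
    finally show ?thesis .
  qed
  have "M * ctrans M = T * Q * (ctrans Q * ctrans T)"
    unfolding MTQ ctrans_mult[OF T Q] ..
  also have "\<dots> = T * (Q * (ctrans Q * ctrans T))"
    by (rule assoc_mult_mat[OF T Q, of _ m]) (use Q T ctrans_carrier[OF Q] ctrans_carrier[OF T] in simp)
  also have "Q * (ctrans Q * ctrans T) = Q * ctrans Q * ctrans T"
    by (rule assoc_mult_mat[OF Q ctrans_carrier[OF Q] ctrans_carrier[OF T], symmetric])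
  also have "T * (Q * ctrans Q * ctrans T) = T * (Q * ctrans Q) * ctrans T"
    by (rule assoc_mult_mat[OF T QQ ctrans_carrier[OF T], symmetric])
  finally have "det (M * ctrans M) = det (T * (Q * ctrans Q) * ctrans T)" by simp
  also have "\<dots> = det (Q * ctrans Q)"
    by (rule det_unit_triangular_conj[OF T QQ]) (auto simp: T_def upper_triangular_def)
  also have "\<dots> = prod_list (diag_mat (Q * ctrans Q))"
    by (rule det_upper_triangular[OF _ QQ]) (use QQ QQ_index in \<open>auto simp: upper_triangular_def\<close>)
  also have "\<dots> = of_real (\<Prod>a<m. sqnorm k (?G!a))"
    unfolding prod_list_diag_prod using Q QQ_index by (simp add: lessThan_atLeast0)
  finally show ?thesis .
qed

section \<open>Truncated lattices\<close>

lemma lat_comb_nonzero: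
  assumes B: "full_rank_lattice_basis n k B" and b: "\<exists>i\<in>{1..2*k*n}. b i \<noteq> 0"
  shows "lat_comb n k (2*k*n) B b \<noteq> 0\<^sub>m n k"
proof
  assume "lat_comb n k (2*k*n) B b = 0\<^sub>m n k"
  then have "mat n k (\<lambda>(a,d). \<Sum>i\<in>{1..2*k*n}. of_real (real_of_int (b i)) * (B i $$ (a,d))) = 0\<^sub>m n k"
    unfolding lat_comb_def by simp
  moreover have "\<forall>c :: nat \<Rightarrow> real. mat n k (\<lambda>(a,d). \<Sum>i\<in>{1..2*k*n}. of_real (c i) * (B i $$ (a,d))) = 0\<^sub>m n k
        \<longrightarrow> (\<forall>i\<in>{1..2*k*n}. c i = 0)"
    using B unfolding full_rank_lattice_basis_def by blast
  ultimately have "\<forall>i\<in>{1..2*k*n}. real_of_int (b i) = 0"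
    by (rule mp[OF spec[where x="\<lambda>i. real_of_int (b i)"], rotated])
  then show False using b by auto
qed

lemma lat_comb_in_trunc_lattice:
  "\<forall>i\<in>{1..2*k*n}. - int N \<le> b i \<and> b i \<le> int N \<Longrightarrow> lat_comb n k (2*k*n) B b \<in> trunc_lattice n k B N"
  unfolding trunc_lattice_def by blast

lemma trunc_lattice_carrier: "X \<in> trunc_lattice n k B N \<Longrightarrow> X \<in> carrier_mat n k"
  unfolding trunc_lattice_def lat_comb_def by auto

lemma trunc_lattice_finite: "finite (trunc_lattice n k B N)"
proof -
  let ?r = "2*k*n"
  have "trunc_lattice n k B N \<subseteq> (\<lambda>b. lat_comb n k ?r B b) ` PiE {1..?r} (\<lambda>_. {- int N..int N})"
  proof
    fix X assume "X \<in> trunc_lattice n k B N"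
    then obtain b where X: "X = lat_comb n k ?r B b" and b: "\<forall>i\<in>{1..?r}. - int N \<le> b i \<and> b i \<le> int N"
      unfolding trunc_lattice_def by blast
    have "lat_comb n k ?r B b = lat_comb n k ?r B (restrict b {1..?r})"
      unfolding lat_comb_def by (intro eq_matI) auto
    moreover have "restrict b {1..?r} \<in> PiE {1..?r} (\<lambda>_. {- int N..int N})" using b by auto
    ultimately show "X \<in> (\<lambda>b. lat_comb n k ?r B b) ` PiE {1..?r} (\<lambda>_. {- int N..int N})"
      unfolding X by blast
  qed
  then show ?thesis by (rule finite_subset) (auto intro: finite_PiE)
qed

text \<open>Inner products of rows of a lattice element are integer combinations of those of the
  basis matrices: these are the linear forms to which Dirichlet's principle is applied.\<close>

lemma cinner_lat_comb_row:
  assumes i: "i < n"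
  shows "cinner k (row_fun k (lat_comb n k r B b) i) y = (\<Sum>t\<in>{1..r}. of_int (b t) * cinner k (row_fun k (B t) i) y)"
proof -
  have "cinner k (row_fun k (lat_comb n k r B b) i) y = (\<Sum>c<k. (\<Sum>t\<in>{1..r}. of_int (b t) * B t $$ (i, c)) * cnj (y c))"
    unfolding cinner_def row_fun_def lat_comb_def using i by (auto intro!: sum.cong)
  also have "\<dots> = (\<Sum>t\<in>{1..r}. of_int (b t) * cinner k (row_fun k (B t) i) y)"
    unfolding cinner_def row_fun_def sum_distrib_right sum_distrib_left
    by (subst sum.swap) (auto intro!: sum.cong simp: mult.assoc)
  finally show ?thesis .
qed

section \<open>Choosing one block\<close>

text \<open>A bound for the coefficients of all these linear forms (the \<open>+ 1\<close> keeps it positive).\<close>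

definition basis_weight :: "nat \<Rightarrow> nat \<Rightarrow> (nat \<Rightarrow> complex mat) \<Rightarrow> real" where
  "basis_weight n k B = (\<Sum>t\<in>{1..2*k*n}. \<Sum>a<n. \<Sum>c<k. cmod (B t $$ (a, c))) + 1"

lemma basis_weight_pos: "basis_weight n k B > 0"
  unfolding basis_weight_def by (simp add: add_nonneg_pos sum_nonneg)

lemma cinner_normalized_bound:
  assumes "sqnorm k q \<noteq> 0"
  shows "cmod (cinner k (row_fun k M i) (normalized k q)) \<le> (\<Sum>c<k. cmod (M $$ (i, c)))"
proof -
  have unit: "cmod (normalized k q c) \<le> 1" if "c < k" for c
  proof -
    have "(cmod (normalized k q c))^2 \<le> sqnorm k (normalized k q)"
      unfolding sqnorm_def using that by (intro member_le_sum) auto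
    also have "\<dots> = 1" using cinner_normalize_self[OF assms] unfolding sqnorm_eq_Re by simp
    finally show ?thesis by (simp add: power_le_one_iff abs_le_square_iff)
  qed
  have "cmod (cinner k (row_fun k M i) (normalized k q)) \<le> (\<Sum>c<k. cmod (M $$ (i,c) * cnj (normalized k q c)))"
    unfolding cinner_def row_fun_def by (simp add: sum_norm_le)
  also have "\<dots> \<le> (\<Sum>c<k. cmod (M $$ (i, c)))"
    by (rule sum_mono) (use unit in \<open>simp add: norm_mult mult_left_le\<close>)
  finally show ?thesis .
qed

lemma coefficient_mass_le_basis_weight:
  assumes "sqnorm k q \<noteq> 0" and i: "i < n"
  shows "(\<Sum>t\<in>{1..2*k*n}. cmod (cinner k (row_fun k (B t) i) (normalized k q))) \<le> basis_weight n k B"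
proof -
  have "(\<Sum>t\<in>{1..2*k*n}. cmod (cinner k (row_fun k (B t) i) (normalized k q)))
      \<le> (\<Sum>t\<in>{1..2*k*n}. \<Sum>a<n. \<Sum>c<k. cmod (B t $$ (a, c)))"
  proof (rule sum_mono)
    fix t
    have "cmod (cinner k (row_fun k (B t) i) (normalized k q)) \<le> (\<Sum>c<k. cmod (B t $$ (i, c)))"
      by (rule cinner_normalized_bound[OF assms(1)])
    also have "\<dots> \<le> (\<Sum>a<n. \<Sum>c<k. cmod (B t $$ (a, c)))"
      using i by (intro member_le_sum[where f = "\<lambda>a. \<Sum>c<k. cmod (B t $$ (a, c))"]) (auto intro: sum_nonneg)
    finally show "cmod (cinner k (row_fun k (B t) i) (normalized k q)) \<le> (\<Sum>a<n. \<Sum>c<k. cmod (B t $$ (a, c)))" .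
  qed
  then show ?thesis unfolding basis_weight_def by simp
qed

lemma cmod_sq_le_of_Re_Im:
  assumes "\<bar>Re z\<bar> \<le> \<delta>" "\<bar>Im z\<bar> \<le> \<delta>"
  shows "(cmod z)^2 \<le> 2 * \<delta>^2"
proof -
  have "\<bar>Re z\<bar>^2 \<le> \<delta>^2" by (rule power_mono[OF assms(1)]) simp
  moreover have "\<bar>Im z\<bar>^2 \<le> \<delta>^2" by (rule power_mono[OF assms(2)]) simp
  ultimately have "(Re z)^2 \<le> \<delta>^2" "(Im z)^2 \<le> \<delta>^2" by simp_all
  then show ?thesis unfolding cmod_power2 by simp
qed

text \<open>The constant of a single block, and the exponent arithmetic turning the Dirichlet bound
  \<open>\<delta> = 4 N W N^{-2kn/(2n(k-d))}\<close> into the block bound.\<close>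

definition block_const :: "nat \<Rightarrow> nat \<Rightarrow> (nat \<Rightarrow> complex mat) \<Rightarrow> real" where
  "block_const n k B = (32 * real k * (basis_weight n k B)^2)^n"

lemma block_const_pos: "k \<ge> 1 \<Longrightarrow> block_const n k B > 0"
  unfolding block_const_def using basis_weight_pos[of n k B] by simp

lemma powr_power_nat: "x > 0 \<Longrightarrow> (x powr e) ^ m = x powr (e * real m)"
  by (simp add: powr_realpow[symmetric] powr_powr)

lemma block_exponent_calc:
  fixes N k d n :: nat and W :: real
  assumes N: "N \<ge> 1" and dk: "d < k" and n: "n \<ge> 1"
  shows "(2 * real k * (4 * real N * W * real N powr (- (real (2*k*n) / real (2*n*(k-d)))))^2) ^ n
     = (32 * real k * W^2) ^ n * real N powr (- (2 * real n * real d) / (real k - real d))"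
proof -
  have Np: "real N > 0" using N by simp
  have kd: "real k - real d > 0" using dk by simp
  have r: "real (2*k*n) / real (2*n*(k-d)) = real k / (real k - real d)"
    using dk n by (simp add: of_nat_diff field_simps)
  have "real N * real N powr (- (real k / (real k - real d))) = real N powr (1 + - (real k / (real k - real d)))"
    using Np by (simp only: powr_add powr_one)
  also have "1 + - (real k / (real k - real d)) = - real d / (real k - real d)"
    using kd by (simp add: field_simps)
  finally have e1: "real N * real N powr (- (real k / (real k - real d))) = real N powr (- real d / (real k - real d))" .
  have "(2 * real k * (4 * real N * W * real N powr (- (real (2*k*n) / real (2*n*(k-d)))))^2)
     = 32 * real k * W^2 * (real N * real N powr (- (real k / (real k - real d))))^2"
    unfolding r by (simp add: power2_eq_square algebra_simps)
  also have "\<dots> = 32 * real k * W^2 * real N powr (- real d / (real k - real d) * 2)"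
    unfolding e1 using powr_power_nat[OF Np, of _ 2] by simp
  finally have "(2 * real k * (4 * real N * W * real N powr (- (real (2*k*n) / real (2*n*(k-d)))))^2) ^ n
     = (32 * real k * W^2) ^ n * (real N powr (- real d / (real k - real d) * 2)) ^ n"
    by (simp only: power_mult_distrib)
  also have "(real N powr (- real d / (real k - real d) * 2)) ^ n = real N powr (- (2 * real n * real d) / (real k - real d))"
    unfolding powr_power_nat[OF Np] by (simp add: field_simps)
  finally show ?thesis .
qed

text \<open>Dirichlet applied to the coordinates of the rows of a lattice point along the orthogonal
  complement of \<open>L\<close>: there are \<open>2n(k-d)\<close> real linear forms (real and imaginary parts) in
  the \<open>2kn\<close> integer coefficients, so some nonzero lattice point of \<open>L(N)\<close> makes all of them
  at most \<open>\<delta> = 4 N W N^{-2kn/(2n(k-d))}\<close>.\<close>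

lemma lattice_point_small_on_complement:
  fixes n k d N :: nat and B :: "nat \<Rightarrow> complex mat" and L :: "(nat \<Rightarrow> complex) list"
  assumes n: "n \<ge> 1" and dk: "d < k" and N: "N \<ge> 1"
    and nz: "\<forall>q\<in>set (gram_schmidt k L). sqnorm k q \<noteq> 0" and lenL: "length L = d"
  obtains b where "\<forall>i\<in>{1..2*k*n}. - int N \<le> b i \<and> b i \<le> int N" and "\<exists>i\<in>{1..2*k*n}. b i \<noteq> 0"
    and "\<And>i s. i < n \<Longrightarrow> s \<in> complement_indices k L \<Longrightarrow>
      (cmod (cinner k (row_fun k (lat_comb n k (2*k*n) B b) i) (normalized k (gram_schmidt k (unit_vecs k @ L) ! s))))^2
        \<le> 2 * (4 * real N * basis_weight n k B * real N powr (- (real (2*k*n) / real (2*n*(k-d)))))^2"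
proof -
  let ?G = "gram_schmidt k (unit_vecs k @ L)"
  define F where "F = complement_indices k L"
  define f where "f s = normalized k (?G ! s)" for s
  define W where "W = basis_weight n k B"
  define r where "r = 2*k*n"
  define D where "D = 2*n*(k-d)"
  define S where "S = F \<times> ({..<n} \<times> (UNIV :: bool set))"
  define w where "w = (\<lambda>(s, i, p) t. (if p then Re else Im) (cinner k (row_fun k (B t) i) (f s)))"
  have finS: "finite S" unfolding S_def F_def complement_indices_def by simp
  have cS: "card S \<le> D"
  proof -
    have "card S = card F * (n * 2)" unfolding S_def F_def complement_indices_def by (simp add: card_cartesian_product)
    also have "\<dots> \<le> (k - d) * (n * 2)"
      using card_complement_indices[OF nz] lenL unfolding F_def by (intro mult_le_mono1) simp
    finally show ?thesis unfolding D_def by (simp add: algebra_simps)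
  qed
  have mass: "(\<Sum>t\<in>{1..r}. \<bar>w s t\<bar>) \<le> W" if s: "s \<in> S" for s
  proof -
    obtain s0 i p where s3: "s = (s0, i, p)" by (cases s) auto
    have s0: "sqnorm k (?G ! s0) \<noteq> 0" and i: "i < n"
      using s s3 unfolding S_def F_def complement_indices_def by auto
    have "(\<Sum>t\<in>{1..r}. \<bar>w s t\<bar>) \<le> (\<Sum>t\<in>{1..r}. cmod (cinner k (row_fun k (B t) i) (f s0)))"
      unfolding s3 w_def by (intro sum_mono) (auto simp: abs_Re_le_cmod abs_Im_le_cmod)
    also have "\<dots> \<le> W"
      unfolding W_def r_def f_def by (rule coefficient_mass_le_basis_weight[OF s0 i])
    finally show ?thesis .
  qed
  have "D \<ge> 1" "r \<ge> 1" unfolding D_def r_def using n dk by simp_all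
  then obtain b where range: "\<forall>i\<in>{1..r}. - int N \<le> b i \<and> b i \<le> int N" and nonzero: "\<exists>i\<in>{1..r}. b i \<noteq> 0"
    and small: "\<forall>s\<in>S. \<bar>\<Sum>t\<in>{1..r}. of_int (b t) * w s t\<bar> \<le> 4 * N * W * N powr (- (r / D))"
    using dirichlet_approximation[OF finS cS _ N _ basis_weight_pos, where w = w] mass
    unfolding W_def by blast
  show ?thesis
  proof (rule that[of b])
    show "\<forall>i\<in>{1..2*k*n}. - int N \<le> b i \<and> b i \<le> int N" "\<exists>i\<in>{1..2*k*n}. b i \<noteq> 0"
      using range nonzero unfolding r_def by auto
    fix i s assume i: "i < n" and s: "s \<in> complement_indices k L"
    define z where "z = cinner k (row_fun k (lat_comb n k r B b) i) (f s)"
    have z: "z = (\<Sum>t\<in>{1..r}. of_int (b t) * cinner k (row_fun k (B t) i) (f s))"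
      unfolding z_def by (rule cinner_lat_comb_row[OF i])
    have "(s, i, True) \<in> S" "(s, i, False) \<in> S" using s i unfolding S_def F_def by auto
    then have parts: "\<bar>Re z\<bar> \<le> 4 * N * W * N powr (- (r / D))" "\<bar>Im z\<bar> \<le> 4 * N * W * N powr (- (r / D))"
      using small unfolding z w_def by (auto simp: Re_sum Im_sum)
    show "(cmod (cinner k (row_fun k (lat_comb n k (2*k*n) B b) i) (normalized k (?G ! s))))^2
        \<le> 2 * (4 * real N * basis_weight n k B * real N powr (- (real (2*k*n) / real (2*n*(k-d)))))^2"
      using cmod_sq_le_of_Re_Im[OF parts] unfolding z_def f_def r_def D_def W_def by simp
  qed
qed

text \<open>Given the rows \<open>L\<close> already fixed (\<open>d < k\<close> of them), some nonzero
  \<open>X \<in> L(N)\<close> has Gram-Schmidt vectors (relative to \<open>L\<close>) whose squared lengths multiply to at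
  most \<open>block_const \<cdot> N^{-2nd/(k-d)}\<close>: by the projection bound each of them is at most
  \<open>k \<cdot> 2\<delta>\<^sup>2\<close>.  If the Gram-Schmidt vectors of \<open>L\<close> degenerate, any nonzero lattice point
  will do (the final determinant is then zero anyway).\<close>

lemma block_choice:
  fixes n k d N :: nat and B :: "nat \<Rightarrow> complex mat" and L :: "(nat \<Rightarrow> complex) list"
  assumes n: "n \<ge> 1" and dk: "d < k" and N: "N \<ge> 1" and B: "full_rank_lattice_basis n k B"
    and suppL: "\<forall>x\<in>set L. supported k x" and lenL: "length L = d"
  shows "\<exists>X\<in>trunc_lattice n k B N - {0\<^sub>m n k}. ((\<forall>q\<in>set (gram_schmidt k L). sqnorm k q \<noteq> 0) \<longrightarrow>
     (\<Prod>i<n. sqnorm k (gram_schmidt k (row_funs k X @ L) ! i)) \<le>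
        block_const n k B * real N powr (- (2 * real n * real d) / (real k - real d)))"
proof (cases "\<forall>q\<in>set (gram_schmidt k L). sqnorm k q \<noteq> 0")
  case False
  define b0 :: "nat \<Rightarrow> int" where "b0 i = (if i = 1 then 1 else 0)" for i
  have "2*k*n \<ge> 1" using n dk by simp
  then have "lat_comb n k (2*k*n) B b0 \<in> trunc_lattice n k B N - {0\<^sub>m n k}"
    using lat_comb_in_trunc_lattice[of k n N b0 B] lat_comb_nonzero[OF B, of b0] N unfolding b0_def by auto
  then show ?thesis using False by blast
next
  case nz: True
  define \<delta> where "\<delta> = 4 * real N * basis_weight n k B * real N powr (- (real (2*k*n) / real (2*n*(k-d))))"
  obtain b where range: "\<forall>i\<in>{1..2*k*n}. - int N \<le> b i \<and> b i \<le> int N" and nonzero: "\<exists>i\<in>{1..2*k*n}. b i \<noteq> 0"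
    and small: "\<And>i s. i < n \<Longrightarrow> s \<in> complement_indices k L \<Longrightarrow>
      (cmod (cinner k (row_fun k (lat_comb n k (2*k*n) B b) i) (normalized k (gram_schmidt k (unit_vecs k @ L) ! s))))^2 \<le> 2 * \<delta>^2"
    using lattice_point_small_on_complement[OF n dk N nz lenL] unfolding \<delta>_def by blast
  define X where "X = lat_comb n k (2*k*n) B b"
  have X: "X \<in> trunc_lattice n k B N - {0\<^sub>m n k}"
    using lat_comb_in_trunc_lattice[of k n N b B] lat_comb_nonzero[OF B, of b] range nonzero
    unfolding X_def by auto
  have dimX: "dim_row X = n" unfolding X_def lat_comb_def by simp
  have row_small: "sqnorm k (gram_schmidt k (row_funs k X @ L) ! i) \<le> 2 * real k * \<delta>^2" if i: "i < n" for i
  proof -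
    have "sqnorm k (gram_schmidt k (row_funs k X @ L) ! i)
        \<le> (\<Sum>s\<in>complement_indices k L. (cmod (cinner k (row_funs k X ! i) (normalized k (gram_schmidt k (unit_vecs k @ L) ! s))))^2)"
      by (rule gram_schmidt_sqnorm_le_complement[OF suppL row_funs_supported]) (simp add: dimX i)
    also have "\<dots> \<le> (\<Sum>s\<in>complement_indices k L. 2 * \<delta>^2)"
      by (rule sum_mono) (use small[OF i] i dimX in \<open>simp add: X_def\<close>)
    also have "\<dots> \<le> real k * (2 * \<delta>^2)"
      using card_complement_indices[OF nz] by (simp add: mult_right_mono)
    finally show ?thesis by simp
  qed
  have "(\<Prod>i<n. sqnorm k (gram_schmidt k (row_funs k X @ L) ! i)) \<le> (2 * real k * \<delta>^2) ^ n"
    using prod_mono[of "{..<n}" "\<lambda>i. sqnorm k (gram_schmidt k (row_funs k X @ L) ! i)" "\<lambda>_. 2 * real k * \<delta>^2"]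
    by (simp add: sqnorm_nonneg row_small)
  also have "\<dots> = block_const n k B * real N powr (- (2 * real n * real d) / (real k - real d))"
    unfolding \<delta>_def block_const_def by (rule block_exponent_calc[OF N dk n])
  finally show ?thesis using X by blast
qed

section \<open>The greedy construction of all blocks\<close>

lemma stack_restrict:
  assumes n: "n \<ge> 1"
  shows "stack U n k (restrict X {1..U}) = stack U n k X"
proof -
  have "a div n + 1 \<in> {1..U}" if "a < U * n" for a
    using that n by (auto simp: less_mult_imp_div_less Suc_leI)
  then show ?thesis unfolding stack_def by (intro eq_matI) auto
qed

lemma decay_le:
  assumes n: "n \<ge> 1" and X: "\<forall>j\<in>{1..U}. X j \<in> trunc_lattice n k (B j) (N j) - {0\<^sub>m n k}"
  shows "decay U n k B N \<le> Re (det (stack U n k X * ctrans (stack U n k X)))"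
proof -
  let ?f = "\<lambda>X. Re (det (stack U n k X * ctrans (stack U n k X)))"
  let ?A = "PiE {1..U} (\<lambda>j. trunc_lattice n k (B j) (N j) - {0\<^sub>m n k})"
  let ?S = "{?f X | X. \<forall>j\<in>{1..U}. X j \<in> trunc_lattice n k (B j) (N j) - {0\<^sub>m n k}}"
  have "?S \<subseteq> ?f ` ?A"
  proof
    fix y assume "y \<in> ?S"
    then obtain Y where y: "y = ?f Y" and Y: "\<forall>j\<in>{1..U}. Y j \<in> trunc_lattice n k (B j) (N j) - {0\<^sub>m n k}" by blast
    have "y = ?f (restrict Y {1..U})" unfolding y stack_restrict[OF n] ..
    moreover have "restrict Y {1..U} \<in> ?A" using Y by auto
    ultimately show "y \<in> ?f ` ?A" by blast
  qed
  moreover have "finite (?f ` ?A)"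
    by (intro finite_imageI finite_PiE) (auto simp: trunc_lattice_finite)
  ultimately have "finite ?S" by (rule finite_subset)
  moreover have "?f X \<in> ?S" using X by blast
  ultimately show ?thesis unfolding decay_def by (rule Min_le)
qed

text \<open>A selector \<open>h l L\<close> choosing the block of user \<open>l\<close> by \<open>block_choice\<close>, given the
  rows \<open>L\<close> of users \<open>l+1, \<dots>, U\<close>.\<close>

lemma block_selector:
  assumes n: "n \<ge> 1" and k: "k \<ge> U*n" and Bb: "\<forall>j\<in>{1..U}. full_rank_lattice_basis n k (B j)"
    and N: "\<forall>j\<in>{1..U}. N j \<ge> 1"
  obtains h where "\<And>l L. dim_row (h l L) = n"
    and "\<And>l L. l \<in> {1..U} \<Longrightarrow> \<forall>x\<in>set L. supported k x \<Longrightarrow> length L = n*(U-l) \<Longrightarrow>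
      h l L \<in> trunc_lattice n k (B l) (N l) - {0\<^sub>m n k} \<and>
      ((\<forall>q\<in>set (gram_schmidt k L). sqnorm k q \<noteq> 0) \<longrightarrow>
        (\<Prod>i<n. sqnorm k (gram_schmidt k (row_funs k (h l L) @ L) ! i)) \<le>
          block_const n k (B l) * real (N l) powr (- (2 * real n * real (n*(U-l))) / (real k - real (n*(U-l)))))"
proof -
  define P where "P l L X \<longleftrightarrow> dim_row X = n \<and>
    (l \<in> {1..U} \<and> (\<forall>x\<in>set L. supported k x) \<and> length L = n*(U-l) \<longrightarrow>
      X \<in> trunc_lattice n k (B l) (N l) - {0\<^sub>m n k} \<and>
      ((\<forall>q\<in>set (gram_schmidt k L). sqnorm k q \<noteq> 0) \<longrightarrow>
        (\<Prod>i<n. sqnorm k (gram_schmidt k (row_funs k X @ L) ! i)) \<le>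
          block_const n k (B l) * real (N l) powr (- (2 * real n * real (n*(U-l))) / (real k - real (n*(U-l))))))"
    for l L X
  have "\<exists>X. P l L X" for l L
  proof (cases "l \<in> {1..U} \<and> (\<forall>x\<in>set L. supported k x) \<and> length L = n*(U-l)")
    case True
    have "n*(U-l) < n*U" using True n by auto
    also have "n*U \<le> k" using k by (simp add: mult.commute)
    finally have dk: "n*(U-l) < k" .
    obtain X where "X \<in> trunc_lattice n k (B l) (N l) - {0\<^sub>m n k}"
      "(\<forall>q\<in>set (gram_schmidt k L). sqnorm k q \<noteq> 0) \<longrightarrow>
        (\<Prod>i<n. sqnorm k (gram_schmidt k (row_funs k X @ L) ! i)) \<le>
          block_const n k (B l) * real (N l) powr (- (2 * real n * real (n*(U-l))) / (real k - real (n*(U-l))))"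
      using block_choice[OF n dk, of "N l" "B l" L] True N Bb by auto
    then show ?thesis unfolding P_def using trunc_lattice_carrier by blast
  next
    case False
    then have "P l L (0\<^sub>m n k)" unfolding P_def by simp
    then show ?thesis ..
  qed
  then obtain h where "\<And>l L. P l L (h l L)" by metis
  then show ?thesis by (intro that) (auto simp: P_def)
qed

text \<open>The rows of the blocks of users \<open>U-j+1, \<dots>, U\<close> (user \<open>U-j+1\<close> first), the block of
  each user being chosen by \<open>h\<close> from the rows of the later users.\<close>

definition greedy_rows :: "nat \<Rightarrow> nat \<Rightarrow> (nat \<Rightarrow> (nat \<Rightarrow> complex) list \<Rightarrow> complex mat) \<Rightarrow> nat \<Rightarrow> (nat \<Rightarrow> complex) list" where
  "greedy_rows k U h j = rec_nat [] (\<lambda>i R. row_funs k (h (U - i) R) @ R) j"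

lemma greedy_rows_0 [simp]: "greedy_rows k U h 0 = []"
  by (simp add: greedy_rows_def)

lemma greedy_rows_Suc [simp]:
  "greedy_rows k U h (Suc j) = row_funs k (h (U - j) (greedy_rows k U h j)) @ greedy_rows k U h j"
  by (simp add: greedy_rows_def)

lemma greedy_rows_length:
  "(\<And>l L. dim_row (h l L) = n) \<Longrightarrow> length (greedy_rows k U h j) = n * j"
  by (induction j) auto

lemma greedy_rows_supported: "\<forall>x\<in>set (greedy_rows k U h j). supported k x"
  by (induction j) (auto simp: row_funs_supported)

lemma greedy_rows_drop:
  assumes hdim: "\<And>l L. dim_row (h l L) = n" and t: "t \<le> j"
  shows "drop (n*t) (greedy_rows k U h j) = greedy_rows k U h (j - t)"
  using t
proof (induction t)
  case (Suc t)
  have "drop (n * Suc t) (greedy_rows k U h j) = drop n (drop (n*t) (greedy_rows k U h j))"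
    by (simp add: drop_drop)
  also have "\<dots> = drop n (greedy_rows k U h (Suc (j - Suc t)))"
    using Suc by (simp add: Suc_diff_Suc)
  also have "\<dots> = greedy_rows k U h (j - Suc t)"
    using hdim by simp
  finally show ?case .
qed simp

lemma greedy_rows_block:
  assumes hdim: "\<And>l L. dim_row (h l L) = n" and l: "l < U"
  shows "drop (n*l) (greedy_rows k U h U) =
    row_funs k (h (Suc l) (greedy_rows k U h (U - Suc l))) @ greedy_rows k U h (U - Suc l)"
proof -
  have "U - l = Suc (U - Suc l)" "U - (U - Suc l) = Suc l" using l by simp_all
  then show ?thesis using greedy_rows_drop[OF hdim, where t=l and j=U] l by simp
qed

lemma greedy_rows_stack:
  assumes hdim: "\<And>l L. dim_row (h l L) = n" and n: "n \<ge> 1"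
  shows "row_funs k (stack U n k (\<lambda>l. h l (greedy_rows k U h (U - l)))) = greedy_rows k U h U"
proof (rule nth_equalityI)
  let ?R = "greedy_rows k U h"
  let ?M = "stack U n k (\<lambda>l. h l (?R (U - l)))"
  show "length (row_funs k ?M) = length (?R U)"
    using greedy_rows_length[OF hdim] by (simp add: stack_def mult.commute)
  fix a assume "a < length (row_funs k ?M)"
  then have a: "a < U*n" by (simp add: stack_def)
  define q where "q = a div n"
  have q: "q < U" using a n unfolding q_def by (simp add: less_mult_imp_div_less)
  have a_split: "a = n*q + a mod n" unfolding q_def by simp
  have "length (?R U) = n*U" by (rule greedy_rows_length[OF hdim])
  then have "n*q \<le> length (?R U)" using q by simp
  then have "?R U ! a = drop (n*q) (?R U) ! (a mod n)"
    using a_split by simp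
  also have "\<dots> = row_fun k (h (Suc q) (?R (U - Suc q))) (a mod n)"
    unfolding greedy_rows_block[OF hdim q] using n hdim by (simp add: nth_append)
  also have "\<dots> = row_fun k ?M a"
    unfolding row_fun_def stack_def q_def using a by auto
  finally show "row_funs k ?M ! a = ?R U ! a" using a by (simp add: stack_def)
qed

lemma prod_lessThan_blocks:
  fixes f :: "nat \<Rightarrow> 'a :: comm_monoid_mult"
  shows "(\<Prod>a<U*n. f a) = (\<Prod>l<U. \<Prod>i<n. f (n*l + i))"
proof -
  have "(\<Prod>i<n. f (n*l + i)) = prod f {l*n..<l*n + n}" for l
    using prod.shift_bounds_nat_ivl[of f 0 "l*n" n] by (simp add: atLeast0LessThan add.commute mult.commute)
  then show ?thesis using prod.nat_group[of f n U] by simp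
qed

lemma prod_gram_schmidt_blocks:
  assumes len: "length rs = U*n"
  shows "(\<Prod>a<U*n. f (gram_schmidt k rs ! a)) = (\<Prod>l<U. \<Prod>i<n. f (gram_schmidt k (drop (n*l) rs) ! i))"
  unfolding prod_lessThan_blocks
proof (intro prod.cong refl)
  fix l i assume l: "l \<in> {..<U}" and i: "i \<in> {..<n}"
  have "n*l + i < n * Suc l" using i by simp
  also have "\<dots> \<le> n*U" using l by (intro mult_le_mono2) simp
  finally show "f (gram_schmidt k rs ! (n*l + i)) = f (gram_schmidt k (drop (n*l) rs) ! i)"
    using len by (simp add: gram_schmidt_nth_drop mult.commute)
qed

lemma prod_sqnorm_degenerate:
  assumes "q \<in> set (gram_schmidt k rs)" "sqnorm k q = 0"
  shows "(\<Prod>a<length rs. sqnorm k (gram_schmidt k rs ! a)) = 0"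
  using assms by (auto simp: in_set_conv_nth intro!: prod_zero)

lemma greedy_gram_product_le:
  assumes hdim: "\<And>l L. dim_row (h l L) = n" and C_nonneg: "\<And>l. C l \<ge> 0"
    and block: "\<And>l. l \<in> {1..U} \<Longrightarrow> (\<forall>q\<in>set (gram_schmidt k (greedy_rows k U h (U-l))). sqnorm k q \<noteq> 0) \<Longrightarrow>
      (\<Prod>i<n. sqnorm k (gram_schmidt k (row_funs k (h l (greedy_rows k U h (U-l))) @ greedy_rows k U h (U-l)) ! i)) \<le> C l"
  shows "(\<Prod>a<U*n. sqnorm k (gram_schmidt k (greedy_rows k U h U) ! a)) \<le> (\<Prod>l\<in>{1..U}. C l)"
proof -
  let ?R = "greedy_rows k U h"
  let ?block = "\<lambda>l. \<Prod>i<n. sqnorm k (gram_schmidt k (row_funs k (h (Suc l) (?R (U - Suc l))) @ ?R (U - Suc l)) ! i)"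
  have lenR: "length (?R U) = U*n" using greedy_rows_length[of h n k U U] hdim by (simp add: mult.commute)
  show ?thesis
  proof (cases "\<forall>q\<in>set (gram_schmidt k (?R U)). sqnorm k q \<noteq> 0")
    case True
    have "(\<Prod>a<U*n. sqnorm k (gram_schmidt k (?R U) ! a)) = (\<Prod>l<U. ?block l)"
      unfolding prod_gram_schmidt_blocks[OF lenR]
      by (intro prod.cong refl) (simp add: greedy_rows_block[OF hdim])
    also have "\<dots> \<le> (\<Prod>l<U. C (Suc l))"
    proof (rule prod_mono)
      fix l assume l: "l \<in> {..<U}"
      have "gram_schmidt k (?R (U - Suc l)) = drop (n * Suc l) (gram_schmidt k (?R U))"
        unfolding gram_schmidt_drop using greedy_rows_drop[of h n "Suc l" U k U, OF hdim] l by simp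
      then have "set (gram_schmidt k (?R (U - Suc l))) \<subseteq> set (gram_schmidt k (?R U))"
        by (simp add: set_drop_subset)
      then show "0 \<le> ?block l \<and> ?block l \<le> C (Suc l)"
        using block[of "Suc l"] l True by (auto intro: prod_nonneg sqnorm_nonneg)
    qed
    also have "\<dots> = (\<Prod>l\<in>{1..U}. C l)"
      by (simp add: prod.atLeast1_atMost_eq)
    finally show ?thesis .
  next
    case False
    then have "(\<Prod>a<U*n. sqnorm k (gram_schmidt k (?R U) ! a)) = 0"
      using prod_sqnorm_degenerate[of _ k "?R U"] lenR by auto
    moreover have "(\<Prod>l\<in>{1..U}. C l) \<ge> 0" using C_nonneg by (simp add: prod_nonneg)
    ultimately show ?thesis by linarith
  qed
qed

lemma decay_le_product:
  fixes U n k :: nat and B :: "nat \<Rightarrow> nat \<Rightarrow> complex mat" and N :: "nat \<Rightarrow> nat"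
  assumes n: "n \<ge> 1" and k: "k \<ge> U*n" and Bb: "\<forall>j\<in>{1..U}. full_rank_lattice_basis n k (B j)"
    and N: "\<forall>j\<in>{1..U}. N j \<ge> 1"
  shows "decay U n k B N \<le> (\<Prod>l\<in>{1..U}. block_const n k (B l) *
     real (N l) powr (- (2 * real n * real (n*(U-l))) / (real k - real (n*(U-l)))))"
proof -
  define C where "C l = block_const n k (B l) *
     real (N l) powr (- (2 * real n * real (n*(U-l))) / (real k - real (n*(U-l))))" for l
  obtain h where hdim: "\<And>l L. dim_row (h l L) = n"
    and hprop: "\<And>l L. l \<in> {1..U} \<Longrightarrow> \<forall>x\<in>set L. supported k x \<Longrightarrow> length L = n*(U-l) \<Longrightarrow>
      h l L \<in> trunc_lattice n k (B l) (N l) - {0\<^sub>m n k} \<and>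
      ((\<forall>q\<in>set (gram_schmidt k L). sqnorm k q \<noteq> 0) \<longrightarrow>
        (\<Prod>i<n. sqnorm k (gram_schmidt k (row_funs k (h l L) @ L) ! i)) \<le> C l)"
    using block_selector[OF n k Bb N] unfolding C_def by metis
  define R where "R = greedy_rows k U h"
  define X where "X l = h l (R (U - l))" for l
  define M where "M = stack U n k X"
  have X: "X l \<in> trunc_lattice n k (B l) (N l) - {0\<^sub>m n k} \<and>
      ((\<forall>q\<in>set (gram_schmidt k (R (U-l))). sqnorm k q \<noteq> 0) \<longrightarrow>
        (\<Prod>i<n. sqnorm k (gram_schmidt k (row_funs k (X l) @ R (U-l)) ! i)) \<le> C l)"
    if "l \<in> {1..U}" for l
    unfolding X_def R_def using hprop[OF that greedy_rows_supported greedy_rows_length[OF hdim]] .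
  have "M \<in> carrier_mat (U*n) k" unfolding M_def stack_def by auto
  moreover have "row_funs k M = R U"
    unfolding M_def X_def R_def by (rule greedy_rows_stack[OF hdim n])
  ultimately have "Re (det (M * ctrans M)) = (\<Prod>a<U*n. sqnorm k (gram_schmidt k (R U) ! a))"
    using gram_determinant[of M "U*n" k] by (simp del: of_real_prod)
  also have "\<dots> \<le> (\<Prod>l\<in>{1..U}. C l)"
    unfolding R_def
  proof (rule greedy_gram_product_le[OF hdim])
    show "C l \<ge> 0" for l unfolding C_def block_const_def using basis_weight_pos[of n k "B l"] by simp
  qed (use X in \<open>auto simp: X_def R_def\<close>)
  moreover have "decay U n k B N \<le> Re (det (M * ctrans M))"
    unfolding M_def by (rule decay_le[OF n]) (use X in blast)
  ultimately show ?thesis unfolding C_def by linarith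
qed

section \<open>Exponent bookkeeping and the main theorem\<close>

text \<open>The factor of user \<open>U\<close> carries exponent zero, and \<open>n \<cdot> n (U-l)\<close> is \<open>n\<^sup>2 (U-l)\<close>.\<close>

lemma exponents_drop_last_user:
  assumes U: "U \<ge> 1" and NU: "N U \<ge> 1"
  shows "(\<Prod>l\<in>{1..U}. real (N l) powr (- (2 * real n * real (n*(U-l))) / (real k - real (n*(U-l))))) =
    (\<Prod>l\<in>{1..U-1}. real (N l) powr (- (2 * real n ^ 2 * real (U - l)) / (real k - real n * real (U - l))))"
proof -
  have "{1..U} = insert U {1..U-1}" using U by auto
  then have "(\<Prod>l\<in>{1..U}. real (N l) powr (- (2 * real n * real (n*(U-l))) / (real k - real (n*(U-l))))) =
      real (N U) powr 0 * (\<Prod>l\<in>{1..U-1}. real (N l) powr (- (2 * real n * real (n*(U-l))) / (real k - real (n*(U-l)))))"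
    using U by (simp add: prod.insert)
  also have "real (N U) powr 0 = 1" using NU by simp
  finally show ?thesis by (simp add: power2_eq_square mult.assoc)
qed

lemma powr_prod_uniform:
  assumes "finite A" and "N \<ge> 1"
  shows "(\<Prod>l\<in>A. real N powr (- a l / b l)) = 1 / real N powr (\<Sum>l\<in>A. a l / b l)"
proof -
  have "(\<Prod>l\<in>A. real N powr (- a l / b l)) = real N powr (\<Sum>l\<in>A. - a l / b l)"
    using assms by (subst powr_sum) auto
  also have "(\<Sum>l\<in>A. - a l / b l) = - (\<Sum>l\<in>A. a l / b l)"
    by (simp add: sum_negf[symmetric])
  finally show ?thesis by (simp add: powr_minus_divide)
qed

text \<open>In the balanced case \<open>k = Un\<close> the exponent simplifies, since \<open>k - n(U-l) = nl\<close>.\<close>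

lemma balanced_exponent:
  assumes kU: "k = U * n" and n: "n \<ge> 1" and l: "l \<in> {1..U-1}"
  shows "(2 * real n ^ 2 * real (U - l)) / (real k - real n * real (U - l)) = (2 * real n * real (U - l)) / real l"
proof -
  have "l \<le> U" using l by auto
  then have "real (U - l) = real U - real l" by (simp add: of_nat_diff)
  then have "real k - real n * real (U - l) = real n * real l"
    using kU by (simp add: algebra_simps)
  then show ?thesis using n l by (simp add: power2_eq_square field_simps)
qed

lemma decay_product_bound:
  assumes U: "U \<ge> 1" and n: "n \<ge> 1" and k: "k \<ge> U * n"
    and Bb: "\<forall>j\<in>{1..U}. full_rank_lattice_basis n k (B j)"
  shows "\<exists>K>0. \<forall>N :: nat \<Rightarrow> nat. (\<forall>j\<in>{1..U}. N j \<ge> 1) \<longrightarrow>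
       decay U n k B N \<le> K * (\<Prod>l\<in>{1..U-1}.
          real (N l) powr (- (2 * real n ^ 2 * real (U - l)) / (real k - real n * real (U - l))))"
proof (intro exI conjI allI impI)
  define K where "K = (\<Prod>l\<in>{1..U}. block_const n k (B l))"
  have "k \<ge> 1" using U n k by (metis le_trans nat_mult_1 mult_le_mono)
  then show "K > 0" unfolding K_def by (intro prod_pos) (simp add: block_const_pos)
  fix N :: "nat \<Rightarrow> nat" assume N: "\<forall>j\<in>{1..U}. N j \<ge> 1"
  have "decay U n k B N \<le> K * (\<Prod>l\<in>{1..U}. real (N l) powr (- (2 * real n * real (n*(U-l))) / (real k - real (n*(U-l)))))"
    using decay_le_product[OF n _ Bb N] k unfolding K_def prod.distrib by (simp add: mult.commute)
  also have "\<dots> = K * (\<Prod>l\<in>{1..U-1}. real (N l) powr (- (2 * real n ^ 2 * real (U - l)) / (real k - real n * real (U - l))))"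
    using exponents_drop_last_user[OF U, of N n k] N U by simp
  finally show "decay U n k B N \<le> K * (\<Prod>l\<in>{1..U-1}.
          real (N l) powr (- (2 * real n ^ 2 * real (U - l)) / (real k - real n * real (U - l))))" .
qed

theorem theorem2p3:
  fixes U n k :: nat and B :: "nat \<Rightarrow> nat \<Rightarrow> complex mat"
  assumes "U \<ge> 1" and "n \<ge> 1" and "k \<ge> U * n"
    and "\<forall>j\<in>{1..U}. full_rank_lattice_basis n k (B j)"
  shows "\<exists>K>0.
    (\<forall>N :: nat \<Rightarrow> nat. (\<forall>j\<in>{1..U}. N j \<ge> 1) \<longrightarrow>
       decay U n k B N \<le> K * (\<Prod>l\<in>{1..U-1}.
          real (N l) powr (- (2 * real n ^ 2 * real (U - l)) / (real k - real n * real (U - l)))))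
    \<and> (\<forall>N :: nat. N \<ge> 1 \<longrightarrow>
       decay U n k B (\<lambda>_. N) \<le> K / real N powr
          (\<Sum>l\<in>{1..U-1}. (2 * real n ^ 2 * real (U - l)) / (real k - real n * real (U - l))))
    \<and> (k = U * n \<longrightarrow>
        (\<forall>N :: nat \<Rightarrow> nat. (\<forall>j\<in>{1..U}. N j \<ge> 1) \<longrightarrow>
           decay U n k B N \<le> K * (\<Prod>l\<in>{1..U-1}.
              real (N l) powr (- (2 * real n * real (U - l)) / real l)))
        \<and> (\<forall>N :: nat. N \<ge> 1 \<longrightarrow>
           decay U n k B (\<lambda>_. N) \<le> K / real N powr
              (\<Sum>l\<in>{1..U-1}. (2 * real n * real (U - l)) / real l)))"
proof -
  obtain K where K: "K > 0" and product: "\<forall>N :: nat \<Rightarrow> nat. (\<forall>j\<in>{1..U}. N j \<ge> 1) \<longrightarrow>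
       decay U n k B N \<le> K * (\<Prod>l\<in>{1..U-1}.
          real (N l) powr (- (2 * real n ^ 2 * real (U - l)) / (real k - real n * real (U - l))))"
    using decay_product_bound[OF assms] by blast
  have uniform: "\<forall>N :: nat. N \<ge> 1 \<longrightarrow> decay U n k B (\<lambda>_. N) \<le> K / real N powr
          (\<Sum>l\<in>{1..U-1}. (2 * real n ^ 2 * real (U - l)) / (real k - real n * real (U - l)))"
  proof (intro allI impI)
    fix N :: nat assume N: "N \<ge> 1"
    have "decay U n k B (\<lambda>_. N) \<le> K * (\<Prod>l\<in>{1..U-1}.
          real N powr (- (2 * real n ^ 2 * real (U - l)) / (real k - real n * real (U - l))))"
      using product N by auto
    then show "decay U n k B (\<lambda>_. N) \<le> K / real N powr
          (\<Sum>l\<in>{1..U-1}. (2 * real n ^ 2 * real (U - l)) / (real k - real n * real (U - l)))"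
      unfolding powr_prod_uniform[OF finite_atLeastAtMost N] by simp
  qed
  have "(\<Prod>l\<in>{1..U-1}. real (N l) powr (- (2 * real n ^ 2 * real (U - l)) / (real k - real n * real (U - l))))
      = (\<Prod>l\<in>{1..U-1}. real (N l) powr (- (2 * real n * real (U - l)) / real l))"
    "(\<Sum>l\<in>{1..U-1}. (2 * real n ^ 2 * real (U - l)) / (real k - real n * real (U - l)))
      = (\<Sum>l\<in>{1..U-1}. (2 * real n * real (U - l)) / real l)"
    if "k = U * n" for N :: "nat \<Rightarrow> nat"
    using balanced_exponent[OF that assms(2)] by (auto intro!: prod.cong sum.cong simp: minus_divide_left[symmetric])
  then show ?thesis using K product uniform by auto
qed

end
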